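(* The structure $\mathcal{W}(I)$ is positive-model-complete in the signature $\{\cup,\cap,\bot,c_0,\min,\max,\mathrm{ips}\}$. That is, every first-order formula in this signature is equivalent in $\mathcal{W}(I)$ to a positive existential formula.
   Context: Let $I$ be a dense linear order with left endpoint $0$ and no right endpoint. $\mathcal{W}(I)$ is the structure whose universe is the set of finite subsets of $I$, interpreted as follows. - $\cup$ and $\cap$ are union and intersection. - $\bot$ is $\emptyset$, and $c_0$ is $\{0\}$. - $\min$ and $\max$ send a nonempty finite set to the singleton of its minimum, respectively maximum, and both fix $\emptyset$. - $\mathrm{ips}(A,B)=\{i\in A: s_A(i)\in B\}$, where $s_A$ is the successor function of the finite linear order $A$. A positive existential formula is one built from atomic formulas using only $\wedge$, $\vee$ and $\exists$. *)

theory Defs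
  imports Main
begin

text \<open>The structure W(I): universe = finite subsets of a dense linear order I with
least element 0 (here: bot) and no greatest element.  Elements are represented as
sets of type 'a set; quantifiers and assignments range over finite sets only.\<close>

definition set_min :: "'a::linorder set \<Rightarrow> 'a set" where
  "set_min A = (if A = {} then {} else {Min A})"

definition set_max :: "'a::linorder set \<Rightarrow> 'a set" where
  "set_max A = (if A = {} then {} else {Max A})"

text \<open>successor of i in the finite linear order A (only meaningful if one exists)\<close>
definition succ_in :: "'a::linorder set \<Rightarrow> 'a \<Rightarrow> 'a" where
  "succ_in A i = Min {j \<in> A. i < j}"

definition ips :: "'a::linorder set \<Rightarrow> 'a set \<Rightarrow> 'a set" where
  "ips A B = {i \<in> A. (\<exists>j\<in>A. i < j) \<and> succ_in A i \<in> B}"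

datatype tm =
    TVar nat
  | TUn tm tm
  | TInt tm tm
  | TBot
  | TC0
  | TMin tm
  | TMax tm
  | TIps tm tm

datatype fm =
    FEq tm tm
  | FNot fm
  | FConj fm fm
  | FDisj fm fm
  | FImp fm fm
  | FEx nat fm
  | FAll nat fm

fun eval_tm :: "(nat \<Rightarrow> 'a::{linorder,order_bot} set) \<Rightarrow> tm \<Rightarrow> 'a set" where
  "eval_tm \<sigma> (TVar n) = \<sigma> n"
| "eval_tm \<sigma> (TUn s t) = eval_tm \<sigma> s \<union> eval_tm \<sigma> t"
| "eval_tm \<sigma> (TInt s t) = eval_tm \<sigma> s \<inter> eval_tm \<sigma> t"
| "eval_tm \<sigma> TBot = {}"
| "eval_tm \<sigma> TC0 = {bot}"
| "eval_tm \<sigma> (TMin t) = set_min (eval_tm \<sigma> t)"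
| "eval_tm \<sigma> (TMax t) = set_max (eval_tm \<sigma> t)"
| "eval_tm \<sigma> (TIps s t) = ips (eval_tm \<sigma> s) (eval_tm \<sigma> t)"

fun holds :: "(nat \<Rightarrow> 'a::{linorder,order_bot} set) \<Rightarrow> fm \<Rightarrow> bool" where
  "holds \<sigma> (FEq s t) = (eval_tm \<sigma> s = eval_tm \<sigma> t)"
| "holds \<sigma> (FNot f) = (\<not> holds \<sigma> f)"
| "holds \<sigma> (FConj f g) = (holds \<sigma> f \<and> holds \<sigma> g)"
| "holds \<sigma> (FDisj f g) = (holds \<sigma> f \<or> holds \<sigma> g)"
| "holds \<sigma> (FImp f g) = (holds \<sigma> f \<longrightarrow> holds \<sigma> g)"
| "holds \<sigma> (FEx x f) = (\<exists>A. finite A \<and> holds (\<sigma>(x := A)) f)"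
| "holds \<sigma> (FAll x f) = (\<forall>A. finite A \<longrightarrow> holds (\<sigma>(x := A)) f)"

fun vars_tm :: "tm \<Rightarrow> nat set" where
  "vars_tm (TVar n) = {n}"
| "vars_tm (TUn s t) = vars_tm s \<union> vars_tm t"
| "vars_tm (TInt s t) = vars_tm s \<union> vars_tm t"
| "vars_tm TBot = {}"
| "vars_tm TC0 = {}"
| "vars_tm (TMin t) = vars_tm t"
| "vars_tm (TMax t) = vars_tm t"
| "vars_tm (TIps s t) = vars_tm s \<union> vars_tm t"

fun free_vars :: "fm \<Rightarrow> nat set" where
  "free_vars (FEq s t) = vars_tm s \<union> vars_tm t"
| "free_vars (FNot f) = free_vars f"
| "free_vars (FConj f g) = free_vars f \<union> free_vars g"
| "free_vars (FDisj f g) = free_vars f \<union> free_vars g"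
| "free_vars (FImp f g) = free_vars f \<union> free_vars g"
| "free_vars (FEx x f) = free_vars f - {x}"
| "free_vars (FAll x f) = free_vars f - {x}"

fun pos_ex :: "fm \<Rightarrow> bool" where
  "pos_ex (FEq s t) = True"
| "pos_ex (FNot f) = False"
| "pos_ex (FConj f g) = (pos_ex f \<and> pos_ex g)"
| "pos_ex (FDisj f g) = (pos_ex f \<and> pos_ex g)"
| "pos_ex (FImp f g) = False"
| "pos_ex (FEx x f) = pos_ex f"
| "pos_ex (FAll x f) = False"

end

theory Submission
  imports Defs
begin

text \<open>The argument is automata-theoretic, in the spirit of Buechi, Elgot and Trakhtenbrot.
  An assignment of finite subsets of \<open>I\<close> to finitely many variables \<open>V\<close> is encoded as a word:
  list the points of \<open>{0} \<union> \<Union>x\<in>V. \<sigma> x\<close> in increasing order and label each point \<open>p\<close> with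
  \<open>p = 0\<close> and the set of variables containing \<open>p\<close>. Call a relation recognizable if it is
  decided by membership of this word in a regular language (one with finitely many left
  quotients).

  Every first-order definable relation is recognizable: the atomic relations are (union,
  intersection and the constants letter by letter, \<open>ips\<close> and \<open>min\<close> by small automata, \<open>max\<close>
  through \<open>max X = X - ips(X, X)\<close>), and recognizable relations are closed under Boolean
  operations and under quantification over a finite set. For the quantifier the language is
  mapped along the morphism that forgets the variable (deleting letters left empty); a word of
  the image is realised because \<open>I\<close> is dense without right endpoint, so fresh points can be
  inserted wherever the word demands them.

  Conversely, a recognizable relation is positive existential: guess, for every letter, the set
  of points carrying it, and for every left quotient \<open>K\<close> of the language, the set of points at
  which the run of the minimal automaton is in state \<open>K\<close>. That these guesses form an accepting
  run is a conjunction of inclusions between terms, because \<open>ips(S, X)\<close> is the set of points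
  of \<open>S\<close> whose successor in \<open>S\<close> lies in \<open>X\<close>.\<close>

section \<open>Regular languages\<close>

definition lquot :: "'c list \<Rightarrow> 'c list set \<Rightarrow> 'c list set" where
  "lquot u L = {w. u @ w \<in> L}"

definition regular :: "'c list set \<Rightarrow> bool" where
  "regular L \<longleftrightarrow> finite (range (\<lambda>u. lquot u L))"

lemma lquot_append: "lquot (u @ v) L = lquot v (lquot u L)"
  by (simp add: lquot_def)

lemma lquot_in_range: "K \<in> range (\<lambda>u. lquot u L) \<Longrightarrow> lquot v K \<in> range (\<lambda>u. lquot u L)"
  by (auto simp flip: lquot_append)

lemma regular_Compl:
  assumes "regular L"
  shows "regular (- L)"
proof -
  have "range (\<lambda>u. lquot u (- L)) = uminus ` range (\<lambda>u. lquot u L)"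
    by (auto simp: lquot_def)
  with assms show ?thesis
    by (simp add: regular_def)
qed

lemma regular_binop:
  assumes "regular L" "regular M"
    and "\<And>u. lquot u (f L M) = f (lquot u L) (lquot u M)"
  shows "regular (f L M)"
proof -
  have "range (\<lambda>u. lquot u (f L M)) \<subseteq> case_prod f ` (range (\<lambda>u. lquot u L) \<times> range (\<lambda>u. lquot u M))"
    using assms(3) by auto
  with assms(1,2) show ?thesis
    unfolding regular_def by (meson finite_SigmaI finite_imageI finite_subset)
qed

lemma regular_Int: "regular L \<Longrightarrow> regular M \<Longrightarrow> regular (L \<inter> M)"
  by (rule regular_binop[where f = "(\<inter>)"]) (auto simp: lquot_def)

lemma regular_Un: "regular L \<Longrightarrow> regular M \<Longrightarrow> regular (L \<union> M)"
  by (rule regular_binop[where f = "(\<union>)"]) (auto simp: lquot_def)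

lemma regular_foldl:
  fixes \<delta> :: "'s::finite \<Rightarrow> 'c \<Rightarrow> 's"
  shows "regular {w. foldl \<delta> q w \<in> F}"
proof -
  have "range (\<lambda>u. lquot u {w. foldl \<delta> q w \<in> F}) \<subseteq> range (\<lambda>q. {w. foldl \<delta> q w \<in> F})"
    by (auto simp: lquot_def)
  then show ?thesis
    unfolding regular_def by (rule finite_subset) simp
qed

lemma regular_lists: "regular (lists A)"
proof -
  have "range (\<lambda>u. lquot u (lists A)) \<subseteq> {lists A, {}}"
    by (auto simp: lquot_def)
  then show ?thesis
    unfolding regular_def by (rule finite_subset) simp
qed

lemma regular_Cons:
  assumes "regular L"
  shows "regular {a # w |a w. a \<in> A \<and> w \<in> L}"
proof -
  let ?M = "{a # w |a w. a \<in> A \<and> w \<in> L}"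
  have "lquot u ?M \<in> insert ?M (insert {} (range (\<lambda>u. lquot u L)))" for u
    by (cases u) (auto simp: lquot_def)
  then have "range (\<lambda>u. lquot u ?M) \<subseteq> insert ?M (insert {} (range (\<lambda>u. lquot u L)))"
    by blast
  with assms show ?thesis
    unfolding regular_def by (simp add: finite_subset)
qed

lemma regular_vimage_map_filter:
  assumes "regular L"
  shows "regular ((\<lambda>w. map f (filter P w)) -` L)"
proof -
  let ?h = "\<lambda>w. map f (filter P w)"
  have "range (\<lambda>u. lquot u (?h -` L)) \<subseteq> (\<lambda>K. ?h -` K) ` range (\<lambda>u. lquot u L)"
  proof
    fix K assume "K \<in> range (\<lambda>u. lquot u (?h -` L))"
    then obtain u where "K = lquot u (?h -` L)" by blast
    then have "K = ?h -` lquot (?h u) L" by (auto simp: lquot_def)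
    then show "K \<in> (\<lambda>K. ?h -` K) ` range (\<lambda>u. lquot u L)" by blast
  qed
  with assms show ?thesis
    unfolding regular_def by (meson finite_imageI finite_subset)
qed

lemma filter_eq_appendD:
  "filter P xs = ys @ zs \<Longrightarrow> \<exists>us vs. xs = us @ vs \<and> filter P us = ys \<and> filter P vs = zs"
proof (induction xs arbitrary: ys)
  case (Cons x xs)
  show ?case
  proof (cases "ys = []")
    case True
    with Cons.prems show ?thesis by (intro exI[of _ "[]"] exI[of _ "x # xs"]) simp
  next
    case False
    show ?thesis
    proof (cases "P x")
      case True
      with Cons.prems False obtain ys' where "ys = x # ys'" "filter P xs = ys' @ zs"
        by (cases ys) auto
      with Cons.IH[of ys'] True show ?thesis
        by (metis append_Cons filter.simps(2))
    next
      case False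
      with Cons.prems Cons.IH[of ys] show ?thesis
        by (metis append_Cons filter.simps(2))
    qed
  qed
qed simp

lemma regular_image_map_filter:
  assumes "regular L"
  shows "regular ((\<lambda>w. map f (filter P w)) ` L)"
proof -
  let ?h = "\<lambda>w. map f (filter P w)"
  have split: "\<exists>m1 m2. m = m1 @ m2 \<and> ?h m1 = u \<and> ?h m2 = w" if hm: "?h m = u @ w" for m u w
  proof -
    obtain u' w' where "filter P m = u' @ w'" "u = map f u'" "w = map f w'"
      using map_eq_append_conv[THEN iffD1, OF hm] by blast
    then show ?thesis
      using filter_eq_appendD[of P m u' w'] by auto
  qed
  have "lquot u (?h ` L) = (\<Union>K\<in>{lquot m L |m. ?h m = u}. ?h ` K)" for u
  proof
    show "lquot u (?h ` L) \<subseteq> (\<Union>K\<in>{lquot m L |m. ?h m = u}. ?h ` K)"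
    proof
      fix w assume "w \<in> lquot u (?h ` L)"
      then obtain m where "m \<in> L" "?h m = u @ w" by (auto simp: lquot_def)
      moreover from split[OF this(2)] obtain m1 m2 where "m = m1 @ m2" "?h m1 = u" "?h m2 = w"
        by blast
      ultimately show "w \<in> (\<Union>K\<in>{lquot m L |m. ?h m = u}. ?h ` K)"
        by (auto simp: lquot_def)
    qed
    show "(\<Union>K\<in>{lquot m L |m. ?h m = u}. ?h ` K) \<subseteq> lquot u (?h ` L)"
      by (auto simp: lquot_def intro!: image_eqI[where x = "_ @ _"])
  qed
  then have "range (\<lambda>u. lquot u (?h ` L)) \<subseteq> (\<lambda>S. \<Union>K\<in>S. ?h ` K) ` Pow (range (\<lambda>u. lquot u L))"
    by blast
  with assms show ?thesis
    unfolding regular_def by (meson finite_Pow_iff finite_imageI finite_subset)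
qed

section \<open>Words of assignments\<close>

type_synonym letter = "bool \<times> nat set"

text \<open>The point \<open>0 = bot\<close> always belongs to the word, flagged in the first component of its
  letter. So every word starts with the letter of \<open>0\<close>, the constant \<open>c\<^sub>0\<close> is read off letter by
  letter, and runs of automata can be started at \<open>c\<^sub>0\<close>.\<close>

definition points :: "nat set \<Rightarrow> (nat \<Rightarrow> 'a::order_bot set) \<Rightarrow> 'a set" where
  "points V \<sigma> = insert bot (\<Union>x\<in>V. \<sigma> x)"

definition letter_at :: "nat set \<Rightarrow> (nat \<Rightarrow> 'a::order_bot set) \<Rightarrow> 'a \<Rightarrow> letter" where
  "letter_at V \<sigma> p = (p = bot, {x \<in> V. p \<in> \<sigma> x})"

definition word :: "nat set \<Rightarrow> (nat \<Rightarrow> 'a::{linorder,order_bot} set) \<Rightarrow> letter list" where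
  "word V \<sigma> = map (letter_at V \<sigma>) (sorted_list_of_set (points V \<sigma>))"

abbreviation finite_assignment :: "(nat \<Rightarrow> 'a set) \<Rightarrow> bool" where
  "finite_assignment \<sigma> \<equiv> \<forall>n. finite (\<sigma> n)"

definition restrict_word :: "nat set \<Rightarrow> letter list \<Rightarrow> letter list" where
  "restrict_word W w = map (\<lambda>a. (fst a, snd a \<inter> W)) (filter (\<lambda>a. fst a \<or> snd a \<inter> W \<noteq> {}) w)"

lemma finite_points: "finite V \<Longrightarrow> finite_assignment \<sigma> \<Longrightarrow> finite (points V \<sigma>)"
  by (simp add: points_def)

lemma Min_points: "finite V \<Longrightarrow> finite_assignment \<sigma> \<Longrightarrow> Min (points V \<sigma>) = bot"
  by (intro Min_eqI) (auto simp: finite_points points_def)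

lemma subset_points: "x \<in> V \<Longrightarrow> \<sigma> x \<subseteq> points V \<sigma>"
  by (auto simp: points_def)

lemma mem_letter_at: "x \<in> V \<Longrightarrow> x \<in> snd (letter_at V \<sigma> p) \<longleftrightarrow> p \<in> \<sigma> x"
  by (simp add: letter_at_def)

lemma sorted_list_of_set_sorted: "sorted_wrt (<) xs \<Longrightarrow> sorted_list_of_set (set xs) = xs"
  by (simp add: sorted_list_of_set.idem_if_sorted_distinct strict_sorted_iff)

lemma word_cong:
  assumes "\<And>x. x \<in> V \<Longrightarrow> \<sigma> x = \<sigma>' x"
  shows "word V \<sigma> = word V \<sigma>'"
proof -
  have "points V \<sigma> = points V \<sigma>'" "letter_at V \<sigma> = letter_at V \<sigma>'"
    using assms by (auto simp: points_def letter_at_def fun_eq_iff)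
  then show ?thesis
    by (simp add: word_def)
qed

lemma set_word: "finite V \<Longrightarrow> finite_assignment \<sigma> \<Longrightarrow> set (word V \<sigma>) = letter_at V \<sigma> ` points V \<sigma>"
  by (simp add: word_def finite_points)

lemma restrict_word_word:
  assumes "W \<subseteq> V" "finite V" "finite_assignment \<sigma>"
  shows "restrict_word W (word V \<sigma>) = word W \<sigma>"
proof -
  let ?ps = "sorted_list_of_set (points V \<sigma>)"
  have "points W \<sigma> \<subseteq> points V \<sigma>"
    using assms(1) by (auto simp: points_def)
  then have "set (filter (\<lambda>p. p \<in> points W \<sigma>) ?ps) = points W \<sigma>"
    by (auto simp: finite_points assms(2,3))
  then have "sorted_list_of_set (points W \<sigma>) = filter (\<lambda>p. p \<in> points W \<sigma>) ?ps"
    using sorted_list_of_set_sorted[of "filter (\<lambda>p. p \<in> points W \<sigma>) ?ps"]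
    by (simp add: sorted_wrt_filter)
  moreover have "(fst (letter_at V \<sigma> p) \<or> snd (letter_at V \<sigma> p) \<inter> W \<noteq> {}) \<longleftrightarrow> p \<in> points W \<sigma>"
    and "(fst (letter_at V \<sigma> p), snd (letter_at V \<sigma> p) \<inter> W) = letter_at W \<sigma> p" for p
    using assms(1) by (auto simp: letter_at_def points_def)
  ultimately show ?thesis
    by (simp add: restrict_word_def word_def filter_map comp_def)
qed

section \<open>Recognizable relations\<close>

definition recognizable :: "nat set \<Rightarrow> ((nat \<Rightarrow> 'a::{linorder,order_bot} set) \<Rightarrow> bool) \<Rightarrow> bool" where
  "recognizable V P \<longleftrightarrow> finite V \<and>
     (\<exists>L. regular L \<and> (\<forall>\<sigma>. finite_assignment \<sigma> \<longrightarrow> P \<sigma> \<longleftrightarrow> word V \<sigma> \<in> L))"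

lemma recognizableI:
  "finite V \<Longrightarrow> regular L \<Longrightarrow> (\<And>\<sigma>. finite_assignment \<sigma> \<Longrightarrow> P \<sigma> \<longleftrightarrow> word V \<sigma> \<in> L) \<Longrightarrow> recognizable V P"
  unfolding recognizable_def by blast

lemma recognizable_finite: "recognizable V P \<Longrightarrow> finite V"
  by (simp add: recognizable_def)

lemma recognizable_cong:
  "recognizable V P \<Longrightarrow> (\<And>\<sigma>. finite_assignment \<sigma> \<Longrightarrow> P \<sigma> \<longleftrightarrow> Q \<sigma>) \<Longrightarrow> recognizable V Q"
  unfolding recognizable_def by blast

lemma recognizable_mono:
  assumes "recognizable V P" "V \<subseteq> W" "finite W"
  shows "recognizable W P"
proof -
  obtain L where L: "regular L" "\<And>\<sigma>. finite_assignment \<sigma> \<Longrightarrow> P \<sigma> \<longleftrightarrow> word V \<sigma> \<in> L"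
    using assms(1) unfolding recognizable_def by meson
  show ?thesis
  proof (rule recognizableI)
    show "regular (restrict_word V -` L)"
      unfolding restrict_word_def by (rule regular_vimage_map_filter[OF L(1)])
    show "P \<sigma> \<longleftrightarrow> word W \<sigma> \<in> restrict_word V -` L" if "finite_assignment \<sigma>" for \<sigma>
      using L(2)[OF that] restrict_word_word[OF assms(2,3) that] by simp
  qed (fact assms(3))
qed

lemma recognizable_not:
  assumes "recognizable V P"
  shows "recognizable V (\<lambda>\<sigma>. \<not> P \<sigma>)"
proof -
  obtain L where "regular L" "\<And>\<sigma>. finite_assignment \<sigma> \<Longrightarrow> P \<sigma> \<longleftrightarrow> word V \<sigma> \<in> L"
    using assms unfolding recognizable_def by meson
  then show ?thesis
    by (intro recognizableI[OF recognizable_finite[OF assms] regular_Compl]) auto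
qed

lemma recognizable_binop:
  fixes f :: "letter list set \<Rightarrow> letter list set \<Rightarrow> letter list set"
  assumes "recognizable V P" "recognizable V Q"
    and "\<And>L M. regular L \<Longrightarrow> regular M \<Longrightarrow> regular (f L M)"
    and "\<And>w L M. w \<in> f L M \<longleftrightarrow> g (w \<in> L) (w \<in> M)"
  shows "recognizable V (\<lambda>\<sigma>. g (P \<sigma>) (Q \<sigma>))"
proof -
  obtain L M where "regular L" "\<And>\<sigma>. finite_assignment \<sigma> \<Longrightarrow> P \<sigma> \<longleftrightarrow> word V \<sigma> \<in> L"
    and "regular M" "\<And>\<sigma>. finite_assignment \<sigma> \<Longrightarrow> Q \<sigma> \<longleftrightarrow> word V \<sigma> \<in> M"
    using assms(1,2) unfolding recognizable_def by meson
  then show ?thesis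
    using assms(3)[of L M]
    by (intro recognizableI[OF recognizable_finite[OF assms(1)], of "f L M"]) (simp_all add: assms(4))
qed

lemma recognizable_conj:
  assumes "recognizable V P" "recognizable W Q"
  shows "recognizable (V \<union> W) (\<lambda>\<sigma>. P \<sigma> \<and> Q \<sigma>)"
proof -
  have fin: "finite (V \<union> W)"
    using assms by (simp add: recognizable_finite)
  show ?thesis
    by (rule recognizable_binop[where f = "(\<inter>)",
          OF recognizable_mono[OF assms(1) _ fin] recognizable_mono[OF assms(2) _ fin]])
      (auto intro: regular_Int)
qed

lemma recognizable_disj:
  assumes "recognizable V P" "recognizable W Q"
  shows "recognizable (V \<union> W) (\<lambda>\<sigma>. P \<sigma> \<or> Q \<sigma>)"
proof -
  have fin: "finite (V \<union> W)"
    using assms by (simp add: recognizable_finite)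
  show ?thesis
    by (rule recognizable_binop[where f = "(\<union>)",
          OF recognizable_mono[OF assms(1) _ fin] recognizable_mono[OF assms(2) _ fin]])
      (auto intro: regular_Un)
qed

lemma recognizable_letterwise:
  assumes "finite V" "\<And>\<sigma>. finite_assignment \<sigma> \<Longrightarrow> P \<sigma> \<longleftrightarrow> (\<forall>p\<in>points V \<sigma>. R (letter_at V \<sigma> p))"
  shows "recognizable V P"
  by (rule recognizableI[OF assms(1) regular_lists[of "Collect R"]]) (auto simp: assms set_word)

definition valid_words :: "nat set \<Rightarrow> letter list set" where
  "valid_words V = {a # w |a w. fst a \<and> snd a \<subseteq> V \<and> w \<in> lists {b. \<not> fst b \<and> snd b \<noteq> {} \<and> snd b \<subseteq> V}}"

lemma regular_valid_words: "regular (valid_words V)"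
proof -
  have "valid_words V = {a # w |a w. a \<in> {a. fst a \<and> snd a \<subseteq> V} \<and>
      w \<in> lists {b. \<not> fst b \<and> snd b \<noteq> {} \<and> snd b \<subseteq> V}}"
    unfolding valid_words_def by blast
  then show ?thesis
    by (simp only:) (rule regular_Cons[OF regular_lists])
qed

lemma sorted_list_of_set_points:
  assumes "finite V" "finite_assignment \<sigma>"
  obtains ps where "sorted_list_of_set (points V \<sigma>) = bot # ps"
    "sorted_wrt (<) (bot # ps)" "set ps = points V \<sigma> - {bot}"
proof -
  have fin: "finite (points V \<sigma>)"
    using assms by (rule finite_points)
  have "sorted_list_of_set (points V \<sigma>) = bot # sorted_list_of_set (points V \<sigma> - {bot})"
    using fin sorted_list_of_set_nonempty[of "points V \<sigma>"] Min_points[OF assms] by (simp add: points_def)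
  moreover have "sorted_wrt (<) (sorted_list_of_set (points V \<sigma>))"
    by simp
  ultimately show ?thesis
    using fin that by simp
qed

lemma word_in_valid_words:
  assumes "finite V" "finite_assignment \<sigma>"
  shows "word V \<sigma> \<in> valid_words V"
proof -
  obtain ps where ps: "sorted_list_of_set (points V \<sigma>) = bot # ps" "set ps = points V \<sigma> - {bot}"
    using sorted_list_of_set_points[OF assms] by metis
  then show ?thesis
    by (auto simp: valid_words_def word_def letter_at_def points_def)
qed

text \<open>The only place where the order properties of \<open>I\<close> are used: density provides a fresh point
  below the next old one, the absence of a greatest element one after the last.\<close>

lemma dense_interleave:
  fixes us :: "'a::{dense_linorder,no_top} list"
  assumes "sorted_wrt (<) (lo # us)" "{p \<in> U. lo < p} = set us" "map f (filter P w) = map g us"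
  shows "\<exists>ps. sorted_wrt (<) (lo # ps) \<and> set us \<subseteq> set ps \<and>
    list_all2 (\<lambda>p a. if P a then g p = f a else p \<notin> U) ps w"
  using assms
proof (induction w arbitrary: lo us)
  case (Cons a w)
  show ?case
  proof (cases "P a")
    case True
    with Cons.prems(3) obtain u us' where us: "us = u # us'" "g u = f a" "map f (filter P w) = map g us'"
      by (cases us) auto
    have "{p \<in> U. u < p} = set us'"
    proof -
      have "{p \<in> U. lo < p} = insert u (set us')" "lo < u" "\<forall>q\<in>set us'. u < q"
        using Cons.prems(1,2) us by auto
      then show ?thesis
        by auto
    qed
    with Cons.IH[of u us'] Cons.prems(1) us obtain ps where
      "sorted_wrt (<) (u # ps)" "set us' \<subseteq> set ps" "list_all2 (\<lambda>p a. if P a then g p = f a else p \<notin> U) ps w"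
      by auto
    with True us Cons.prems(1) show ?thesis
      by (intro exI[of _ "u # ps"]) auto
  next
    case False
    obtain z where z: "lo < z" "\<forall>u\<in>set us. z < u"
    proof (cases us)
      case Nil
      then show ?thesis using gt_ex that by auto
    next
      case (Cons u us')
      with Cons.prems(1) obtain z where "lo < z" "z < u"
        using dense[of lo u] by auto
      with Cons Cons.prems(1) that show ?thesis
        by (auto intro: less_trans)
    qed
    have "{p \<in> U. z < p} = set us"
      using Cons.prems(2) z by (auto intro: less_trans)
    with Cons.IH[of z us] Cons.prems(1,3) False z obtain ps where
      "sorted_wrt (<) (z # ps)" "set us \<subseteq> set ps" "list_all2 (\<lambda>p a. if P a then g p = f a else p \<notin> U) ps w"
      by auto
    moreover have "z \<notin> U"
      using Cons.prems(2) z by auto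
    ultimately show ?thesis
      using False z(1) by (intro exI[of _ "z # ps"]) auto
  qed
qed simp

lemma list_all2_marking:
  assumes "distinct ps" "length ps = length w"
  shows "\<exists>A\<subseteq>set ps. list_all2 (\<lambda>p a. p \<in> A \<longleftrightarrow> Q a) ps w"
  using assms
proof (induction ps arbitrary: w)
  case (Cons p ps)
  then obtain a w' where w: "w = a # w'"
    by (cases w) auto
  with Cons obtain A where A: "A \<subseteq> set ps" "list_all2 (\<lambda>p a. p \<in> A \<longleftrightarrow> Q a) ps w'"
    by auto
  let ?A = "if Q a then insert p A else A"
  have "list_all2 (\<lambda>q b. q \<in> ?A \<longleftrightarrow> Q b) ps w'"
    using A(2) by (rule list.rel_mono_strong) (use Cons.prems(1) A(1) in auto)
  with A(1) w Cons.prems(1) show ?case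
    by (intro exI[of _ ?A]) auto
qed simp

lemma restrict_word_eq_wordE:
  fixes \<sigma> :: "nat \<Rightarrow> 'a::{dense_linorder,no_top,order_bot} set"
  assumes W: "finite W" and \<sigma>: "finite_assignment \<sigma>" and "fst a"
    and restrict: "restrict_word W (a # w) = word W \<sigma>"
  obtains ps where "sorted_wrt (<) ps" "points W \<sigma> \<subseteq> set ps"
    "list_all2 (\<lambda>p b. if fst b \<or> snd b \<inter> W \<noteq> {} then letter_at W \<sigma> p = (fst b, snd b \<inter> W)
      else p \<notin> points W \<sigma>) ps (a # w)"
proof -
  let ?U = "points W \<sigma>" and ?P = "\<lambda>b. fst b \<or> snd b \<inter> W \<noteq> {}"
  let ?f = "\<lambda>b. (fst b, snd b \<inter> W)" and ?g = "letter_at W \<sigma>"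
  obtain us where us: "sorted_list_of_set ?U = bot # us" "sorted_wrt (<) (bot # us)" "set us = ?U - {bot}"
    using sorted_list_of_set_points[OF W \<sigma>] by auto
  have "{p \<in> ?U. bot < p} = set us"
    using us(3) by (auto simp flip: bot_less)
  moreover have "?g bot = ?f a" "map ?f (filter ?P w) = map ?g us"
    using restrict \<open>fst a\<close> us(1) by (simp_all add: restrict_word_def word_def)
  ultimately obtain ps where "sorted_wrt (<) (bot # ps)" "set us \<subseteq> set ps"
    "list_all2 (\<lambda>p b. if ?P b then ?g p = ?f b else p \<notin> ?U) ps w"
    using dense_interleave[OF us(2)] by blast
  with us(3) \<open>?g bot = ?f a\<close> \<open>fst a\<close> show thesis
    by (intro that[of "bot # ps"]) auto
qed

lemma letter_at_fun_upd:
  assumes "if fst a \<or> snd a \<inter> (V - {x}) \<noteq> {} then letter_at (V - {x}) \<sigma> p = (fst a, snd a \<inter> (V - {x}))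
      else p \<notin> points (V - {x}) \<sigma>"
    and "p \<in> A \<longleftrightarrow> x \<in> snd a" "snd a \<subseteq> V"
  shows "letter_at V (\<sigma>(x := A)) p = a"
proof -
  have "(p = bot) = fst a \<and> {y \<in> V - {x}. p \<in> \<sigma> y} = snd a \<inter> (V - {x})"
  proof (cases "fst a \<or> snd a \<inter> (V - {x}) \<noteq> {}")
    case True
    with assms(1) show ?thesis
      by (simp add: letter_at_def)
  next
    case False
    with assms(1) have "p \<notin> points (V - {x}) \<sigma>"
      by simp
    with False show ?thesis
      by (auto simp: points_def)
  qed
  with assms(2,3) show ?thesis
    by (auto simp: letter_at_def prod_eq_iff)
qed

lemma word_realize:
  fixes \<sigma> :: "nat \<Rightarrow> 'a::{dense_linorder,no_top,order_bot} set"
  assumes V: "finite V" and \<sigma>: "finite_assignment \<sigma>" and w: "w \<in> valid_words V"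
    and restrict: "restrict_word (V - {x}) w = word (V - {x}) \<sigma>"
  shows "\<exists>A. finite A \<and> word V (\<sigma>(x := A)) = w"
proof -
  obtain a w' where "w = a # w'" "fst a"
    and w_letters: "\<forall>b\<in>set w. snd b \<subseteq> V \<and> (fst b \<or> snd b \<noteq> {})"
    using w by (auto simp: valid_words_def)
  with restrict_word_eq_wordE[of "V - {x}" \<sigma> a w'] V \<sigma> restrict obtain ps where
    sorted: "sorted_wrt (<) ps" and U_ps: "points (V - {x}) \<sigma> \<subseteq> set ps"
    and rel: "list_all2 (\<lambda>p b. if fst b \<or> snd b \<inter> (V - {x}) \<noteq> {}
      then letter_at (V - {x}) \<sigma> p = (fst b, snd b \<inter> (V - {x})) else p \<notin> points (V - {x}) \<sigma>) ps w"
    by auto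
  have "distinct ps"
    using sorted strict_sorted_iff by blast
  from list_all2_marking[OF this list_all2_lengthD[OF rel], of "\<lambda>b. x \<in> snd b"]
  obtain A where A: "A \<subseteq> set ps" "list_all2 (\<lambda>p b. p \<in> A \<longleftrightarrow> x \<in> snd b) ps w"
    by blast
  let ?\<sigma> = "\<sigma>(x := A)"
  have "list_all2 (\<lambda>p b. letter_at V ?\<sigma> p = b) ps w"
  proof (rule list_all2_all_nthI)
    show len: "length ps = length w"
      using rel by (rule list_all2_lengthD)
    fix i
    assume i: "i < length ps"
    show "letter_at V ?\<sigma> (ps ! i) = w ! i"
      using letter_at_fun_upd[OF list_all2_nthD[OF rel i] list_all2_nthD[OF A(2) i]] w_letters i len
      by simp
  qed
  then have map_ps: "map (letter_at V ?\<sigma>) ps = w"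
    by (simp add: list_all2_map1[symmetric] list.rel_eq)
  have "points V ?\<sigma> = set ps"
  proof
    show "points V ?\<sigma> \<subseteq> set ps"
    proof
      fix p assume "p \<in> points V ?\<sigma>"
      then obtain y where "p = bot \<or> y \<in> V \<and> p \<in> ?\<sigma> y"
        unfolding points_def by blast
      then have "p \<in> points (V - {x}) \<sigma> \<or> p \<in> A"
        by (cases "y = x") (auto simp: points_def)
      with U_ps A(1) show "p \<in> set ps"
        by blast
    qed
    show "set ps \<subseteq> points V ?\<sigma>"
    proof
      fix p assume "p \<in> set ps"
      then have "letter_at V ?\<sigma> p \<in> set w"
        using map_ps by force
      then have "fst (letter_at V ?\<sigma> p) \<or> snd (letter_at V ?\<sigma> p) \<noteq> {}"
        using w_letters by blast
      then show "p \<in> points V ?\<sigma>"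
        by (auto simp: letter_at_def points_def simp del: fun_upd_apply)
    qed
  qed
  then have "word V ?\<sigma> = w"
    using map_ps sorted by (simp add: word_def sorted_list_of_set_sorted)
  moreover have "finite A"
    using A(1) finite_subset by blast
  ultimately show ?thesis
    by blast
qed

lemma recognizable_ex:
  fixes P :: "(nat \<Rightarrow> 'a::{dense_linorder,no_top,order_bot} set) \<Rightarrow> bool"
  assumes "recognizable V P"
  shows "recognizable (V - {x}) (\<lambda>\<sigma>. \<exists>A. finite A \<and> P (\<sigma>(x := A)))"
proof -
  have V: "finite V"
    using assms by (rule recognizable_finite)
  obtain L where L: "regular L" "\<And>\<sigma>. finite_assignment \<sigma> \<Longrightarrow> P \<sigma> \<longleftrightarrow> word V \<sigma> \<in> L"
    using assms unfolding recognizable_def by meson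
  show ?thesis
  proof (rule recognizableI)
    show "finite (V - {x})"
      using V by simp
    show "regular (restrict_word (V - {x}) ` (L \<inter> valid_words V))"
      unfolding restrict_word_def by (intro regular_image_map_filter regular_Int L(1) regular_valid_words)
    fix \<sigma> :: "nat \<Rightarrow> 'a set"
    assume \<sigma>: "finite_assignment \<sigma>"
    show "(\<exists>A. finite A \<and> P (\<sigma>(x := A))) \<longleftrightarrow>
      word (V - {x}) \<sigma> \<in> restrict_word (V - {x}) ` (L \<inter> valid_words V)"
    proof
      assume "\<exists>A. finite A \<and> P (\<sigma>(x := A))"
      then obtain A where A: "finite A" "P (\<sigma>(x := A))"
        by blast
      have \<sigma>A: "finite_assignment (\<sigma>(x := A))"
        using \<sigma> A(1) by simp
      have "word V (\<sigma>(x := A)) \<in> L \<inter> valid_words V"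
        using L(2)[OF \<sigma>A] A(2) word_in_valid_words[OF V \<sigma>A] by blast
      moreover have "restrict_word (V - {x}) (word V (\<sigma>(x := A))) = word (V - {x}) \<sigma>"
        using restrict_word_word[of "V - {x}" V "\<sigma>(x := A)"] V \<sigma>A word_cong[of "V - {x}" "\<sigma>(x := A)" \<sigma>]
        by simp
      ultimately show "word (V - {x}) \<sigma> \<in> restrict_word (V - {x}) ` (L \<inter> valid_words V)"
        by (metis image_eqI)
    next
      assume "word (V - {x}) \<sigma> \<in> restrict_word (V - {x}) ` (L \<inter> valid_words V)"
      then obtain w where w: "w \<in> L" "w \<in> valid_words V" "restrict_word (V - {x}) w = word (V - {x}) \<sigma>"
        by auto
      then obtain A where "finite A" "word V (\<sigma>(x := A)) = w"
        using word_realize[OF V \<sigma>] by blast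
      with L(2) \<sigma> w(1) show "\<exists>A. finite A \<and> P (\<sigma>(x := A))"
        by (metis fun_upd_apply)
    qed
  qed
qed

lemma recognizable_let:
  fixes F :: "(nat \<Rightarrow> 'a::{dense_linorder,no_top,order_bot} set) \<Rightarrow> 'a set"
  assumes "recognizable V (\<lambda>\<sigma>. \<sigma> x = F \<sigma>)" "recognizable V P"
    and "\<And>\<sigma> A. F (\<sigma>(x := A)) = F \<sigma>" "\<And>\<sigma>. finite_assignment \<sigma> \<Longrightarrow> finite (F \<sigma>)"
    and "\<And>\<sigma>. finite_assignment \<sigma> \<Longrightarrow> Q \<sigma> \<longleftrightarrow> P (\<sigma>(x := F \<sigma>))"
  shows "recognizable (V - {x}) Q"
proof -
  have "recognizable V (\<lambda>\<sigma>. \<sigma> x = F \<sigma> \<and> P \<sigma>)"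
    using recognizable_conj[OF assms(1,2)] by simp
  from recognizable_ex[OF this, of x]
  have "recognizable (V - {x}) (\<lambda>\<sigma>. \<exists>A. finite A \<and> (\<sigma>(x := A)) x = F (\<sigma>(x := A)) \<and> P (\<sigma>(x := A)))" .
  then show ?thesis
  proof (rule recognizable_cong)
    fix \<sigma> :: "nat \<Rightarrow> 'a set"
    assume \<sigma>: "finite_assignment \<sigma>"
    have eq: "(\<sigma>(x := A)) x = F (\<sigma>(x := A)) \<longleftrightarrow> A = F \<sigma>" for A
      by (simp add: assms(3))
    have "(\<exists>A. finite A \<and> (\<sigma>(x := A)) x = F (\<sigma>(x := A)) \<and> P (\<sigma>(x := A))) \<longleftrightarrow>
      P (\<sigma>(x := F \<sigma>))"
    proof
      assume "\<exists>A. finite A \<and> (\<sigma>(x := A)) x = F (\<sigma>(x := A)) \<and> P (\<sigma>(x := A))"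
      then obtain A where A: "(\<sigma>(x := A)) x = F (\<sigma>(x := A))" "P (\<sigma>(x := A))"
        by blast
      from A(1) have "A = F \<sigma>"
        using eq by blast
      with A(2) show "P (\<sigma>(x := F \<sigma>))"
        by simp
    next
      assume "P (\<sigma>(x := F \<sigma>))"
      with assms(4)[OF \<sigma>]
      show "\<exists>A. finite A \<and> (\<sigma>(x := A)) x = F (\<sigma>(x := A)) \<and> P (\<sigma>(x := A))"
        by (intro exI[of _ "F \<sigma>"]) (simp add: assms(3))
    qed
    with assms(5)[OF \<sigma>]
    show "(\<exists>A. finite A \<and> (\<sigma>(x := A)) x = F (\<sigma>(x := A)) \<and> P (\<sigma>(x := A))) \<longleftrightarrow> Q \<sigma>"
      by simp
  qed
qed

section \<open>Successors and the operation ips\<close>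

lemma succ_in_mem:
  assumes "finite X" "i \<in> X" "\<exists>j\<in>X. i < j"
  shows "succ_in X i \<in> X" "i < succ_in X i"
proof -
  have "Min {j \<in> X. i < j} \<in> {j \<in> X. i < j}"
    using assms by (intro Min_in) auto
  then show "succ_in X i \<in> X" "i < succ_in X i"
    by (simp_all add: succ_in_def)
qed

lemma ips_subset: "ips X Y \<subseteq> X"
  by (auto simp: ips_def)

lemma ips_cong: "finite X \<Longrightarrow> X \<inter> Y = X \<inter> Y' \<Longrightarrow> ips X Y = ips X Y'"
  unfolding ips_def using succ_in_mem by blast

lemma ips_insert_least:
  fixes X :: "'a::linorder set"
  assumes "finite X" "\<forall>q\<in>X. p < q"
  shows "ips (insert p X) Y = (if X \<noteq> {} \<and> Min X \<in> Y then {p} else {}) \<union> ips X Y"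
proof -
  have "{j \<in> insert p X. i < j} = {j \<in> X. i < j}" if "i \<in> X" for i
    using assms that by auto
  then have succ_X: "succ_in (insert p X) i = succ_in X i" if "i \<in> X" for i
    using that by (simp add: succ_in_def)
  have "{j \<in> insert p X. p < j} = X"
    using assms by auto
  then have succ_p: "succ_in (insert p X) p = Min X"
    by (simp add: succ_in_def)
  have "p \<notin> X"
    using assms by auto
  then show ?thesis
    using assms(2) succ_X succ_p by (auto simp: ips_def)
qed

lemma set_max_eq_diff_ips:
  assumes "finite X"
  shows "set_max X = X - ips X X"
proof -
  have "ips X X = {i \<in> X. \<exists>j\<in>X. i < j}"
    unfolding ips_def using succ_in_mem[OF assms] by blast
  moreover have "i \<in> X \<and> \<not> (\<exists>j\<in>X. i < j) \<longleftrightarrow> X \<noteq> {} \<and> i = Max X" for i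
  proof
    assume "i \<in> X \<and> \<not> (\<exists>j\<in>X. i < j)"
    then show "X \<noteq> {} \<and> i = Max X"
      using assms by (auto simp: not_less intro: Max_eqI[symmetric])
  next
    assume "X \<noteq> {} \<and> i = Max X"
    then show "i \<in> X \<and> \<not> (\<exists>j\<in>X. i < j)"
      using Max_in[OF assms] Max_ge[OF assms] by (auto simp: not_less)
  qed
  ultimately have "X - ips X X = {i. X \<noteq> {} \<and> i = Max X}"
    by blast
  then show ?thesis
    by (auto simp: set_max_def)
qed

lemma set_min_subset: "finite X \<Longrightarrow> set_min X \<subseteq> X"
  by (simp add: set_min_def)

lemma set_min_insert_least: "finite X \<Longrightarrow> \<forall>q\<in>X. p < q \<Longrightarrow> set_min (insert p X) = {p}"
  by (simp add: set_min_def) (metis Min_insert2 less_imp_le)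

lemma succ_in_le: "finite S \<Longrightarrow> r \<in> S \<Longrightarrow> q < r \<Longrightarrow> succ_in S q \<le> r"
  by (simp add: succ_in_def)

lemma succ_in_eqI:
  assumes "finite S" "q \<in> S" "p \<in> S" "q < p" "\<not> (\<exists>r\<in>S. q < r \<and> r < p)"
  shows "succ_in S q = p"
  unfolding succ_in_def using assms by (intro Min_eqI) (auto simp: not_less)

lemma finite_succ_induct:
  fixes S :: "'a::linorder set"
  assumes "finite S" "p \<in> S" "P (Min S)"
    and step: "\<And>q. q \<in> S \<Longrightarrow> \<exists>j\<in>S. q < j \<Longrightarrow> P q \<Longrightarrow> P (succ_in S q)"
  shows "P p"
  using assms(2)
proof (induction "card {q \<in> S. q < p}" arbitrary: p rule: less_induct)
  case less
  show ?case
  proof (cases "p = Min S")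
    case True
    with assms(3) show ?thesis
      by simp
  next
    case False
    let ?B = "{q \<in> S. q < p}"
    have "Min S < p"
      using False Min_le[OF assms(1) less.prems] by simp
    moreover have "Min S \<in> S"
      using Min_in[OF assms(1)] less.prems by blast
    ultimately have "?B \<noteq> {}" "finite ?B"
      using assms(1) by auto
    then have q: "Max ?B \<in> S" "Max ?B < p"
      using Max_in by auto
    have "succ_in S (Max ?B) = p"
      using q less.prems \<open>finite ?B\<close> by (intro succ_in_eqI[OF assms(1)]) (auto simp: not_less)
    moreover have "card {r \<in> S. r < Max ?B} < card ?B"
      using q \<open>finite ?B\<close> by (intro psubset_card_mono) auto
    then have "P (Max ?B)"
      using less.hyps q(1) by blast
    ultimately show ?thesis
      using step[of "Max ?B"] q less.prems by auto
  qed
qed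

lemma ips_insert_least_iff:
  fixes p :: "'a::linorder"
  assumes "finite X" "\<forall>q\<in>X \<union> Y \<union> Z. p < q"
  shows "(if c then insert p Z else Z) = ips (if a then insert p X else X) (if b then insert p Y else Y) \<longleftrightarrow>
    (c \<longleftrightarrow> a \<and> X \<noteq> {} \<and> Min X \<in> Y) \<and> Z = ips X Y"
proof -
  have "p \<notin> X" "p \<notin> Z" "p \<notin> ips X Y"
    using assms(2) ips_subset by fastforce+
  have "X \<inter> (if b then insert p Y else Y) = X \<inter> Y"
    using \<open>p \<notin> X\<close> by auto
  then have ips_X: "ips X (if b then insert p Y else Y) = ips X Y"
    by (rule ips_cong[OF assms(1)])
  have "X \<noteq> {} \<Longrightarrow> Min X \<in> X"
    using Min_in[OF assms(1)] by blast
  then have "ips (if a then insert p X else X) (if b then insert p Y else Y) =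
      (if a \<and> X \<noteq> {} \<and> Min X \<in> Y then {p} else {}) \<union> ips X Y"
    using ips_insert_least[OF assms(1), of p] assms(2) ips_X \<open>p \<notin> X\<close> by auto
  with \<open>p \<notin> Z\<close> \<open>p \<notin> ips X Y\<close> show ?thesis
    by auto
qed

lemma insert_least_first_in_iff:
  fixes p :: "'a::linorder"
  assumes "finite X" "\<forall>q\<in>X \<union> Y. p < q"
  shows "(if a then insert p X else X) \<noteq> {} \<and> Min (if a then insert p X else X) \<in> (if b then insert p Y else Y) \<longleftrightarrow>
    (if a then b else X \<noteq> {} \<and> Min X \<in> Y)"
proof -
  have "Min (insert p X) = p"
    using assms by (intro Min_eqI) (auto intro: less_imp_le)
  moreover have "X \<noteq> {} \<Longrightarrow> Min X \<noteq> p"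
    using Min_in[OF assms(1)] assms(2) by fastforce
  ultimately show ?thesis
    using assms(2) by auto
qed

section \<open>Recognizable atomic relations\<close>

lemma recognizable_eq_var: "recognizable {z, x} (\<lambda>\<sigma>. \<sigma> z = \<sigma> x)"
  by (rule recognizable_letterwise[where R = "\<lambda>a. z \<in> snd a \<longleftrightarrow> x \<in> snd a"])
    (auto simp: letter_at_def points_def)

lemma recognizable_eq_empty: "recognizable {z} (\<lambda>\<sigma>. \<sigma> z = {})"
  by (rule recognizable_letterwise[where R = "\<lambda>a. z \<notin> snd a"])
    (auto simp: letter_at_def points_def)

lemma recognizable_eq_bot: "recognizable {z} (\<lambda>\<sigma>. \<sigma> z = {bot})"
  by (rule recognizable_letterwise[where R = "\<lambda>a. z \<in> snd a \<longleftrightarrow> fst a"])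
    (auto simp: letter_at_def points_def)

lemma recognizable_eq_Un: "recognizable {z, x, y} (\<lambda>\<sigma>. \<sigma> z = \<sigma> x \<union> \<sigma> y)"
  by (rule recognizable_letterwise[where R = "\<lambda>a. z \<in> snd a \<longleftrightarrow> x \<in> snd a \<or> y \<in> snd a"])
    (auto simp: letter_at_def points_def)

lemma recognizable_eq_Int: "recognizable {z, x, y} (\<lambda>\<sigma>. \<sigma> z = \<sigma> x \<inter> \<sigma> y)"
  by (rule recognizable_letterwise[where R = "\<lambda>a. z \<in> snd a \<longleftrightarrow> x \<in> snd a \<and> y \<in> snd a"])
    (auto simp: letter_at_def points_def)

lemma recognizable_eq_Diff: "recognizable {z, x, y} (\<lambda>\<sigma>. \<sigma> z = \<sigma> x - \<sigma> y)"
  by (rule recognizable_letterwise[where R = "\<lambda>a. z \<in> snd a \<longleftrightarrow> x \<in> snd a \<and> y \<notin> snd a"])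
    (auto simp: letter_at_def points_def)

text \<open>States of the automaton for \<open>z = ips(x, y)\<close>: \<open>None\<close> is the rejecting sink; in
  \<open>Some (Some b)\<close> the next point of \<open>x\<close> must exist and lie in \<open>y\<close> if \<open>b\<close>, and, if it exists,
  must not lie in \<open>y\<close> if \<open>\<not> b\<close>; \<open>Some None\<close> imposes no constraint.\<close>

definition ips_step :: "nat \<Rightarrow> nat \<Rightarrow> nat \<Rightarrow> bool option option \<Rightarrow> letter \<Rightarrow> bool option option" where
  "ips_step x y z q a = (case q of None \<Rightarrow> None | Some r \<Rightarrow>
     if x \<in> snd a then (if r \<in> {None, Some (y \<in> snd a)} then Some (Some (z \<in> snd a)) else None)
     else if z \<in> snd a then None else Some r)"

lemma foldl_ips_step_None: "foldl (ips_step x y z) None w = None"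
  by (induction w) (simp_all add: ips_step_def)

lemma foldl_ips_step:
  fixes \<sigma> :: "nat \<Rightarrow> 'a::{linorder,order_bot} set"
  assumes "x \<in> V" "y \<in> V" "z \<in> V" "sorted_wrt (<) ps"
  shows "foldl (ips_step x y z) (Some r) (map (letter_at V \<sigma>) ps) \<in> Some ` {None, Some False} \<longleftrightarrow>
    r \<in> {None, Some (\<sigma> x \<inter> set ps \<noteq> {} \<and> Min (\<sigma> x \<inter> set ps) \<in> \<sigma> y \<inter> set ps)} \<and>
    \<sigma> z \<inter> set ps = ips (\<sigma> x \<inter> set ps) (\<sigma> y \<inter> set ps)"
  using assms(4)
proof (induction ps arbitrary: r)
  case Nil
  then show ?case
    by (auto simp: ips_def)
next
  case (Cons p ps)
  have sets: "\<sigma> v \<inter> set (p # ps) = (if p \<in> \<sigma> v then insert p (\<sigma> v \<inter> set ps) else \<sigma> v \<inter> set ps)" for v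
    by auto
  have fin: "finite (\<sigma> x \<inter> set ps)"
    by simp
  have less: "\<forall>q\<in>(\<sigma> x \<inter> set ps) \<union> (\<sigma> y \<inter> set ps) \<union> (\<sigma> z \<inter> set ps). p < q"
    and less': "\<forall>q\<in>(\<sigma> x \<inter> set ps) \<union> (\<sigma> y \<inter> set ps). p < q"
    using Cons.prems by auto
  have "ips_step x y z (Some r) (letter_at V \<sigma> p) =
      (if p \<in> \<sigma> x then (if r \<in> {None, Some (p \<in> \<sigma> y)} then Some (Some (p \<in> \<sigma> z)) else None)
       else if p \<in> \<sigma> z then None else Some r)"
    using assms(1-3) by (simp add: ips_step_def mem_letter_at)
  with Cons show ?case
    unfolding sets ips_insert_least_iff[OF fin less] insert_least_first_in_iff[OF fin less']
    by (auto simp: foldl_ips_step_None)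
qed

lemma recognizable_ips: "recognizable {x, y, z} (\<lambda>\<sigma>. \<sigma> z = ips (\<sigma> x) (\<sigma> y))"
proof (rule recognizableI)
  show "regular {w. foldl (ips_step x y z) (Some None) w \<in> Some ` {None, Some False}}"
    by (rule regular_foldl)
  fix \<sigma> :: "nat \<Rightarrow> 'a::{linorder,order_bot} set"
  assume "finite_assignment \<sigma>"
  then have "\<sigma> v \<inter> set (sorted_list_of_set (points {x, y, z} \<sigma>)) = \<sigma> v" if "v \<in> {x, y, z}" for v
    using subset_points[OF that] by (auto simp: finite_points)
  then show "\<sigma> z = ips (\<sigma> x) (\<sigma> y) \<longleftrightarrow>
      word {x, y, z} \<sigma> \<in> {w. foldl (ips_step x y z) (Some None) w \<in> Some ` {None, Some False}}"
    using foldl_ips_step[of x "{x, y, z}" y z "sorted_list_of_set (points {x, y, z} \<sigma>)" None \<sigma>]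
    by (simp add: word_def)
qed simp

text \<open>In state \<open>Some seen\<close>, \<open>seen\<close> tells whether a point of \<open>x\<close> has been read already.\<close>

definition min_step :: "nat \<Rightarrow> nat \<Rightarrow> bool option \<Rightarrow> letter \<Rightarrow> bool option" where
  "min_step x z q a = (case q of None \<Rightarrow> None | Some seen \<Rightarrow>
     if seen then (if z \<in> snd a then None else Some True)
     else if z \<in> snd a \<longleftrightarrow> x \<in> snd a then Some (x \<in> snd a) else None)"

lemma foldl_min_step_None: "foldl (min_step x z) None w = None"
  by (induction w) (simp_all add: min_step_def)

lemma foldl_min_step:
  fixes \<sigma> :: "nat \<Rightarrow> 'a::{linorder,order_bot} set"
  assumes "x \<in> V" "z \<in> V" "sorted_wrt (<) ps"
  shows "foldl (min_step x z) (Some seen) (map (letter_at V \<sigma>) ps) \<noteq> None \<longleftrightarrow>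
    \<sigma> z \<inter> set ps = (if seen then {} else set_min (\<sigma> x \<inter> set ps))"
  using assms(3)
proof (induction ps arbitrary: seen)
  case Nil
  then show ?case
    by (simp add: set_min_def)
next
  case (Cons p ps)
  let ?X = "\<sigma> x \<inter> set ps" and ?Z = "\<sigma> z \<inter> set ps"
  have less: "\<forall>q\<in>?X. p < q" and "p \<notin> set ps"
    using Cons.prems by auto
  then have "p \<notin> set_min ?X" "insert p ?Z = {p} \<longleftrightarrow> ?Z = {}" "?Z \<noteq> {p}" "insert p ?Z \<noteq> set_min ?X"
    using set_min_subset[of ?X] by auto
  moreover have "set_min (insert p ?X) = {p}"
    using set_min_insert_least[OF _ less] by simp
  moreover have "foldl (min_step x z) (Some seen') (map (letter_at V \<sigma>) ps) \<noteq> None \<longleftrightarrow>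
      ?Z = (if seen' then {} else set_min ?X)" for seen'
    using Cons by simp
  moreover have "\<sigma> v \<inter> set (p # ps) = (if p \<in> \<sigma> v then insert p (\<sigma> v \<inter> set ps) else \<sigma> v \<inter> set ps)" for v
    by auto
  moreover have "min_step x z (Some seen) (letter_at V \<sigma> p) =
      (if seen then (if p \<in> \<sigma> z then None else Some True)
       else if p \<in> \<sigma> z \<longleftrightarrow> p \<in> \<sigma> x then Some (p \<in> \<sigma> x) else None)"
    using assms(1,2) by (simp add: min_step_def mem_letter_at)
  ultimately show ?case
    by (cases seen; cases "p \<in> \<sigma> x"; cases "p \<in> \<sigma> z") (simp_all add: foldl_min_step_None)
qed

lemma recognizable_set_min: "recognizable {x, z} (\<lambda>\<sigma>. \<sigma> z = set_min (\<sigma> x))"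
proof (rule recognizableI)
  show "regular {w. foldl (min_step x z) (Some False) w \<in> - {None}}"
    by (rule regular_foldl)
  fix \<sigma> :: "nat \<Rightarrow> 'a::{linorder,order_bot} set"
  assume "finite_assignment \<sigma>"
  then have "\<sigma> v \<inter> set (sorted_list_of_set (points {x, z} \<sigma>)) = \<sigma> v" if "v \<in> {x, z}" for v
    using subset_points[OF that] by (auto simp: finite_points)
  then show "\<sigma> z = set_min (\<sigma> x) \<longleftrightarrow> word {x, z} \<sigma> \<in> {w. foldl (min_step x z) (Some False) w \<in> - {None}}"
    using foldl_min_step[of x "{x, z}" z "sorted_list_of_set (points {x, z} \<sigma>)" False \<sigma>]
    by (simp add: word_def)
qed simp

lemma recognizable_set_max:
  "recognizable {x, z} (\<lambda>\<sigma>::nat \<Rightarrow> 'a::{dense_linorder,no_top,order_bot} set. \<sigma> z = set_max (\<sigma> x))"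
proof -
  obtain w :: nat where w: "w \<notin> {x, z}"
    using ex_new_if_finite[OF infinite_UNIV_nat, of "{x, z}"] by blast
  have "recognizable {x, z, w} (\<lambda>\<sigma>::nat \<Rightarrow> 'a set. \<sigma> w = ips (\<sigma> x) (\<sigma> x))"
    using recognizable_mono[OF recognizable_ips[of x x w]] by auto
  moreover have "recognizable {x, z, w} (\<lambda>\<sigma>::nat \<Rightarrow> 'a set. \<sigma> z = \<sigma> x - \<sigma> w)"
    using recognizable_eq_Diff[of z x w] by (simp add: insert_commute)
  ultimately have "recognizable ({x, z, w} - {w}) (\<lambda>\<sigma>::nat \<Rightarrow> 'a set. \<sigma> z = set_max (\<sigma> x))"
    by (rule recognizable_let)
      (use w in \<open>auto simp: set_max_eq_diff_ips intro: finite_subset[OF ips_subset]\<close>)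
  moreover have "{x, z, w} - {w} = {x, z}"
    using w by auto
  ultimately show ?thesis
    by simp
qed

section \<open>Terms and formulas\<close>

lemma finite_eval_tm: "finite_assignment \<sigma> \<Longrightarrow> finite (eval_tm \<sigma> t)"
  by (induction t) (auto simp: set_min_def set_max_def intro: finite_subset[OF ips_subset])

lemma eval_tm_fun_upd: "x \<notin> vars_tm t \<Longrightarrow> eval_tm (\<sigma>(x := A)) t = eval_tm \<sigma> t"
  by (induction t) auto

lemma finite_vars_tm: "finite (vars_tm t)"
  by (induction t) auto

lemma recognizable_eval_binop:
  fixes f :: "'a::{dense_linorder,no_top,order_bot} set \<Rightarrow> 'a set \<Rightarrow> 'a set"
  assumes base: "\<And>z z1 z2. z \<noteq> z1 \<Longrightarrow> z \<noteq> z2 \<Longrightarrow> z1 \<noteq> z2 \<Longrightarrow>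
      recognizable {z, z1, z2} (\<lambda>\<sigma>::nat \<Rightarrow> 'a set. \<sigma> z = f (\<sigma> z1) (\<sigma> z2))"
    and IH1: "\<And>z. z \<notin> vars_tm s1 \<Longrightarrow>
      recognizable (insert z (vars_tm s1)) (\<lambda>\<sigma>::nat \<Rightarrow> 'a set. \<sigma> z = eval_tm \<sigma> s1)"
    and IH2: "\<And>z. z \<notin> vars_tm s2 \<Longrightarrow>
      recognizable (insert z (vars_tm s2)) (\<lambda>\<sigma>::nat \<Rightarrow> 'a set. \<sigma> z = eval_tm \<sigma> s2)"
    and z: "z \<notin> vars_tm s1 \<union> vars_tm s2"
  shows "recognizable (insert z (vars_tm s1 \<union> vars_tm s2))
    (\<lambda>\<sigma>::nat \<Rightarrow> 'a set. \<sigma> z = f (eval_tm \<sigma> s1) (eval_tm \<sigma> s2))"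
proof -
  let ?S = "insert z (vars_tm s1 \<union> vars_tm s2)"
  have fin: "finite ?S"
    by (simp add: finite_vars_tm)
  obtain z1 where z1: "z1 \<notin> ?S"
    using ex_new_if_finite[OF infinite_UNIV_nat fin] by blast
  obtain z2 where z2: "z2 \<notin> insert z1 ?S"
    using ex_new_if_finite[OF infinite_UNIV_nat] fin by blast
  let ?W = "insert z1 (insert z2 ?S)"
  have "recognizable ?W (\<lambda>\<sigma>::nat \<Rightarrow> 'a set. \<sigma> z2 = eval_tm \<sigma> s2)"
    by (rule recognizable_mono[OF IH2[of z2]]) (use z2 fin in auto)
  moreover have "recognizable ?W (\<lambda>\<sigma>::nat \<Rightarrow> 'a set. \<sigma> z = f (\<sigma> z1) (\<sigma> z2))"
    by (rule recognizable_mono[OF base[of z z1 z2]]) (use z1 z2 fin in auto)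
  ultimately have R2: "recognizable (?W - {z2}) (\<lambda>\<sigma>::nat \<Rightarrow> 'a set. \<sigma> z = f (\<sigma> z1) (eval_tm \<sigma> s2))"
    by (rule recognizable_let) (use z1 z2 in \<open>auto simp: eval_tm_fun_upd finite_eval_tm\<close>)
  have R1: "recognizable (?W - {z2}) (\<lambda>\<sigma>::nat \<Rightarrow> 'a set. \<sigma> z1 = eval_tm \<sigma> s1)"
    by (rule recognizable_mono[OF IH1[of z1]]) (use z1 z2 fin in auto)
  from R1 R2 have "recognizable (?W - {z2} - {z1}) (\<lambda>\<sigma>::nat \<Rightarrow> 'a set. \<sigma> z = f (eval_tm \<sigma> s1) (eval_tm \<sigma> s2))"
    by (rule recognizable_let) (use z1 in \<open>auto simp: eval_tm_fun_upd finite_eval_tm\<close>)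
  moreover have "?W - {z2} - {z1} = ?S"
    using z1 z2 by auto
  ultimately show ?thesis
    by simp
qed

lemma recognizable_eval_tm:
  "z \<notin> vars_tm t \<Longrightarrow>
    recognizable (insert z (vars_tm t)) (\<lambda>\<sigma>::nat \<Rightarrow> 'a::{dense_linorder,no_top,order_bot} set. \<sigma> z = eval_tm \<sigma> t)"
proof (induction t arbitrary: z)
  case (TVar n)
  then show ?case
    using recognizable_eq_var[of z n] by simp
next
  case (TUn s1 s2)
  have "recognizable (insert z (vars_tm s1 \<union> vars_tm s2))
      (\<lambda>\<sigma>::nat \<Rightarrow> 'a set. \<sigma> z = eval_tm \<sigma> s1 \<union> eval_tm \<sigma> s2)"
    using TUn by (intro recognizable_eval_binop[where f = "(\<union>)"] recognizable_eq_Un) auto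
  then show ?case
    by simp
next
  case (TInt s1 s2)
  have "recognizable (insert z (vars_tm s1 \<union> vars_tm s2))
      (\<lambda>\<sigma>::nat \<Rightarrow> 'a set. \<sigma> z = eval_tm \<sigma> s1 \<inter> eval_tm \<sigma> s2)"
    using TInt by (intro recognizable_eval_binop[where f = "(\<inter>)"] recognizable_eq_Int) auto
  then show ?case
    by simp
next
  case TBot
  then show ?case
    using recognizable_eq_empty[of z] by simp
next
  case TC0
  then show ?case
    using recognizable_eq_bot[of z] by simp
next
  case (TMin t)
  have "recognizable {z, z1, z2} (\<lambda>\<sigma>::nat \<Rightarrow> 'a set. \<sigma> z = set_min (\<sigma> z1))" for z z1 z2
    by (rule recognizable_mono[OF recognizable_set_min]) auto
  then have "recognizable (insert z (vars_tm t \<union> vars_tm t))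
      (\<lambda>\<sigma>::nat \<Rightarrow> 'a set. \<sigma> z = set_min (eval_tm \<sigma> t))"
    using TMin by (intro recognizable_eval_binop[where f = "\<lambda>X Y. set_min X"]) auto
  then show ?case
    by simp
next
  case (TMax t)
  have "recognizable {z, z1, z2} (\<lambda>\<sigma>::nat \<Rightarrow> 'a set. \<sigma> z = set_max (\<sigma> z1))" for z z1 z2
    by (rule recognizable_mono[OF recognizable_set_max]) auto
  then have "recognizable (insert z (vars_tm t \<union> vars_tm t))
      (\<lambda>\<sigma>::nat \<Rightarrow> 'a set. \<sigma> z = set_max (eval_tm \<sigma> t))"
    using TMax by (intro recognizable_eval_binop[where f = "\<lambda>X Y. set_max X"]) auto
  then show ?case
    by simp
next
  case (TIps s1 s2)
  have "recognizable {z, z1, z2} (\<lambda>\<sigma>::nat \<Rightarrow> 'a set. \<sigma> z = ips (\<sigma> z1) (\<sigma> z2))" for z z1 z2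
    using recognizable_ips[of z1 z2 z] by (simp add: insert_commute)
  then have "recognizable (insert z (vars_tm s1 \<union> vars_tm s2))
      (\<lambda>\<sigma>::nat \<Rightarrow> 'a set. \<sigma> z = ips (eval_tm \<sigma> s1) (eval_tm \<sigma> s2))"
    using TIps by (intro recognizable_eval_binop[where f = ips]) auto
  then show ?case
    by simp
qed

lemma recognizable_holds:
  "recognizable (free_vars \<phi>) (\<lambda>\<sigma>::nat \<Rightarrow> 'a::{dense_linorder,no_top,order_bot} set. holds \<sigma> \<phi>)"
proof (induction \<phi>)
  case (FEq s t)
  obtain z where z: "z \<notin> vars_tm s \<union> vars_tm t"
    using ex_new_if_finite[OF infinite_UNIV_nat] finite_vars_tm by blast
  let ?V = "insert z (vars_tm s \<union> vars_tm t)"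
  have "recognizable ?V (\<lambda>\<sigma>::nat \<Rightarrow> 'a set. \<sigma> z = eval_tm \<sigma> s)"
    by (rule recognizable_mono[OF recognizable_eval_tm]) (use z in \<open>auto simp: finite_vars_tm\<close>)
  moreover have "recognizable ?V (\<lambda>\<sigma>::nat \<Rightarrow> 'a set. \<sigma> z = eval_tm \<sigma> t)"
    by (rule recognizable_mono[OF recognizable_eval_tm]) (use z in \<open>auto simp: finite_vars_tm\<close>)
  ultimately have "recognizable (?V - {z}) (\<lambda>\<sigma>::nat \<Rightarrow> 'a set. holds \<sigma> (FEq s t))"
    by (rule recognizable_let) (use z in \<open>auto simp: eval_tm_fun_upd finite_eval_tm\<close>)
  moreover have "?V - {z} = free_vars (FEq s t)"
    using z by auto
  ultimately show ?case
    by simp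
next
  case (FNot \<phi>)
  then show ?case
    using recognizable_not by fastforce
next
  case (FConj \<phi> \<psi>)
  then show ?case
    using recognizable_conj by fastforce
next
  case (FDisj \<phi> \<psi>)
  then show ?case
    using recognizable_disj by fastforce
next
  case (FImp \<phi> \<psi>)
  from recognizable_disj[OF recognizable_not[OF FImp.IH(1)] FImp.IH(2)]
  have "recognizable (free_vars \<phi> \<union> free_vars \<psi>) (\<lambda>\<sigma>::nat \<Rightarrow> 'a set. holds \<sigma> (FImp \<phi> \<psi>))"
    by (rule recognizable_cong) auto
  then show ?case
    by simp
next
  case (FEx x \<phi>)
  from recognizable_ex[OF FEx.IH, of x]
  show ?case
    by (simp add: fun_upd_def)
next
  case (FAll x \<phi>)
  from recognizable_not[OF recognizable_ex[OF recognizable_not[OF FAll.IH], of x]]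
  have "recognizable (free_vars \<phi> - {x}) (\<lambda>\<sigma>::nat \<Rightarrow> 'a set. holds \<sigma> (FAll x \<phi>))"
    by (rule recognizable_cong) (auto simp: fun_upd_def)
  then show ?case
    by simp
qed

section \<open>Runs of the minimal automaton\<close>

lemma sorted_list_of_set_insert_greatest:
  assumes "finite A" "\<forall>a\<in>A. a < s"
  shows "sorted_list_of_set (insert s A) = sorted_list_of_set A @ [s]"
proof -
  have "sorted_wrt (<) (sorted_list_of_set A @ [s])"
    using assms by (simp add: sorted_wrt_append)
  then show ?thesis
    using sorted_list_of_set_sorted assms(1) by fastforce
qed

definition word_upto :: "nat set \<Rightarrow> (nat \<Rightarrow> 'a::{linorder,order_bot} set) \<Rightarrow> 'a \<Rightarrow> letter list" where
  "word_upto V \<sigma> p = map (letter_at V \<sigma>) (sorted_list_of_set {q \<in> points V \<sigma>. q \<le> p})"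

lemma word_upto_bot: "word_upto V \<sigma> bot = [letter_at V \<sigma> bot]"
proof -
  have "{q \<in> points V \<sigma>. q \<le> bot} = {bot}"
    by (auto simp: points_def bot_unique)
  then show ?thesis
    by (simp add: word_upto_def)
qed

lemma word_upto_Max:
  assumes "finite V" "finite_assignment \<sigma>"
  shows "word_upto V \<sigma> (Max (points V \<sigma>)) = word V \<sigma>"
proof -
  have "{q \<in> points V \<sigma>. q \<le> Max (points V \<sigma>)} = points V \<sigma>"
    using finite_points[OF assms] by auto
  then show ?thesis
    by (simp add: word_upto_def word_def)
qed

lemma word_upto_succ_in:
  assumes "finite V" "finite_assignment \<sigma>" "q \<in> points V \<sigma>" "\<exists>j\<in>points V \<sigma>. q < j"
  defines "s \<equiv> succ_in (points V \<sigma>) q"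
  shows "word_upto V \<sigma> s = word_upto V \<sigma> q @ [letter_at V \<sigma> s]"
proof -
  let ?S = "points V \<sigma>"
  have fin: "finite ?S"
    using assms(1,2) by (rule finite_points)
  have "q < s"
    using succ_in_mem[OF fin assms(3,4)] by (simp add: s_def)
  moreover have "s \<in> ?S"
    using succ_in_mem[OF fin assms(3,4)] by (simp add: s_def)
  moreover have "r \<le> q" if "r \<in> ?S" "r < s" for r
    using that succ_in_le[OF fin, of r q] by (fastforce simp: s_def not_le)
  ultimately have upto_s: "{r \<in> ?S. r \<le> s} = insert s {r \<in> ?S. r \<le> q}"
    by force
  have "\<forall>r\<in>{r \<in> ?S. r \<le> q}. r < s"
    using \<open>q < s\<close> by auto
  with fin have "sorted_list_of_set {r \<in> ?S. r \<le> s} = sorted_list_of_set {r \<in> ?S. r \<le> q} @ [s]"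
    unfolding upto_s by (intro sorted_list_of_set_insert_greatest) auto
  then show ?thesis
    by (simp add: word_upto_def)
qed

definition letters :: "nat set \<Rightarrow> letter set" where
  "letters V = {a. snd a \<subseteq> V}"

definition letter_labelling :: "nat set \<Rightarrow> (nat \<Rightarrow> 'a::order_bot set) \<Rightarrow> (letter \<Rightarrow> 'a set) \<Rightarrow> bool" where
  "letter_labelling V \<sigma> X \<longleftrightarrow>
     points V \<sigma> \<subseteq> (\<Union>a\<in>letters V. X a) \<and>
     (\<forall>a\<in>letters V. \<forall>y\<in>V. if y \<in> snd a then X a \<subseteq> \<sigma> y else X a \<inter> \<sigma> y = {}) \<and>
     (\<forall>a\<in>letters V. if fst a then X a \<subseteq> {bot} else bot \<notin> X a)"

definition accepting_run ::
  "nat set \<Rightarrow> letter list set \<Rightarrow> 'a::{linorder,order_bot} set \<Rightarrow> (letter \<Rightarrow> 'a set) \<Rightarrow> (letter list set \<Rightarrow> 'a set) \<Rightarrow> bool"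
where
  "accepting_run V L S X Q \<longleftrightarrow>
     (\<forall>K\<in>range (\<lambda>u. lquot u L). \<forall>K'\<in>range (\<lambda>u. lquot u L). K \<noteq> K' \<longrightarrow> Q K \<inter> Q K' = {}) \<and>
     (\<forall>a\<in>letters V. {bot} \<inter> X a \<subseteq> Q (lquot [a] L)) \<and>
     (\<forall>K\<in>range (\<lambda>u. lquot u L). \<forall>a\<in>letters V. ips S (X a) \<inter> Q K \<subseteq> ips S (Q (lquot [a] K))) \<and>
     set_max S \<subseteq> (\<Union>K\<in>{K \<in> range (\<lambda>u. lquot u L). [] \<in> K}. Q K)"

lemma finite_letters: "finite V \<Longrightarrow> finite (letters V)"
proof -
  assume "finite V"
  moreover have "letters V \<subseteq> UNIV \<times> Pow V"
    by (auto simp: letters_def)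
  ultimately show ?thesis
    by (simp add: finite_subset)
qed

lemma letter_at_in_letters: "letter_at V \<sigma> p \<in> letters V"
  by (simp add: letters_def letter_at_def)

lemma letter_labelling_iff:
  assumes "letter_labelling V \<sigma> X" "p \<in> points V \<sigma>" "a \<in> letters V"
  shows "p \<in> X a \<longleftrightarrow> a = letter_at V \<sigma> p"
proof -
  have "b = letter_at V \<sigma> p" if b: "b \<in> letters V" "p \<in> X b" for b
  proof -
    have "y \<in> snd b \<longleftrightarrow> p \<in> \<sigma> y" if "y \<in> V" for y
      using assms(1) b that unfolding letter_labelling_def by (metis IntI empty_iff subsetD)
    moreover have "snd b \<subseteq> V"
      using b(1) by (simp add: letters_def)
    ultimately have "snd b = {y \<in> V. p \<in> \<sigma> y}"
      by auto
    moreover have "fst b \<longleftrightarrow> p = bot"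
      using assms(1) b unfolding letter_labelling_def by (metis singletonD subsetD)
    ultimately show ?thesis
      by (simp add: letter_at_def prod_eq_iff)
  qed
  moreover obtain b where "b \<in> letters V" "p \<in> X b"
    using assms(1,2) by (auto simp: letter_labelling_def)
  ultimately show ?thesis
    using assms(3) by blast
qed

lemma letter_labelling_letter_at:
  "letter_labelling V \<sigma> (\<lambda>a. {p \<in> points V \<sigma>. letter_at V \<sigma> p = a})"
  by (auto simp: letter_labelling_def letter_at_in_letters) (auto simp: letter_at_def)

lemma accepting_run_state:
  assumes V: "finite V" and \<sigma>: "finite_assignment \<sigma>"
    and X: "letter_labelling V \<sigma> X" and run: "accepting_run V L (points V \<sigma>) X Q"
    and p: "p \<in> points V \<sigma>"
  shows "p \<in> Q (lquot (word_upto V \<sigma> p) L)"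
proof -
  let ?S = "points V \<sigma>" and ?state = "\<lambda>p. lquot (word_upto V \<sigma> p) L"
  have init: "\<forall>a\<in>letters V. {bot} \<inter> X a \<subseteq> Q (lquot [a] L)"
    and step: "\<forall>K\<in>range (\<lambda>u. lquot u L). \<forall>a\<in>letters V. ips ?S (X a) \<inter> Q K \<subseteq> ips ?S (Q (lquot [a] K))"
    using run unfolding accepting_run_def by blast+
  have fin: "finite ?S"
    using V \<sigma> by (rule finite_points)
  have in_X: "p \<in> X (letter_at V \<sigma> p)" if "p \<in> ?S" for p
    using letter_labelling_iff[OF X that letter_at_in_letters[of V \<sigma> p]] by simp
  show ?thesis
  proof (rule finite_succ_induct[OF fin p])
    have "bot \<in> ?S"
      by (simp add: points_def)
    then have "bot \<in> Q (lquot [letter_at V \<sigma> bot] L)"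
      using init in_X letter_at_in_letters by blast
    then show "Min ?S \<in> Q (?state (Min ?S))"
      by (simp add: Min_points[OF V \<sigma>] word_upto_bot)
  next
    fix q
    assume q: "q \<in> ?S" "\<exists>j\<in>?S. q < j" and IH: "q \<in> Q (?state q)"
    let ?s = "succ_in ?S q"
    have "?s \<in> ?S"
      using succ_in_mem[OF fin q] by simp
    then have "q \<in> ips ?S (X (letter_at V \<sigma> ?s)) \<inter> Q (?state q)"
      using q IH in_X by (simp add: ips_def)
    then have "q \<in> ips ?S (Q (lquot [letter_at V \<sigma> ?s] (?state q)))"
      using step[rule_format, OF rangeI letter_at_in_letters] by blast
    then show "?s \<in> Q (?state ?s)"
      by (simp add: ips_def word_upto_succ_in[OF V \<sigma> q] lquot_append)
  qed
qed

lemma accepting_run_imp_word_in: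
  assumes V: "finite V" and \<sigma>: "finite_assignment \<sigma>"
    and X: "letter_labelling V \<sigma> X" and run: "accepting_run V L (points V \<sigma>) X Q"
  shows "word V \<sigma> \<in> L"
proof -
  let ?S = "points V \<sigma>" and ?m = "Max (points V \<sigma>)"
  have disjoint: "\<forall>K\<in>range (\<lambda>u. lquot u L). \<forall>K'\<in>range (\<lambda>u. lquot u L). K \<noteq> K' \<longrightarrow> Q K \<inter> Q K' = {}"
    and final: "set_max ?S \<subseteq> (\<Union>K\<in>{K \<in> range (\<lambda>u. lquot u L). [] \<in> K}. Q K)"
    using run unfolding accepting_run_def by blast+
  have "?S \<noteq> {}"
    by (simp add: points_def)
  then have "?m \<in> ?S" "?m \<in> set_max ?S"
    using Max_in[OF finite_points[OF V \<sigma>]] by (auto simp: set_max_def)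
  then obtain K where K: "K \<in> range (\<lambda>u. lquot u L)" "[] \<in> K" "?m \<in> Q K"
    using final by blast
  moreover have "?m \<in> Q (lquot (word V \<sigma>) L)"
    using accepting_run_state[OF V \<sigma> X run \<open>?m \<in> ?S\<close>] by (simp add: word_upto_Max[OF V \<sigma>])
  ultimately have "K = lquot (word V \<sigma>) L"
    using disjoint by blast
  with K(2) show ?thesis
    by (simp add: lquot_def)
qed

lemma word_in_imp_accepting_run:
  assumes V: "finite V" and \<sigma>: "finite_assignment \<sigma>" and w: "word V \<sigma> \<in> L"
  shows "accepting_run V L (points V \<sigma>)
    (\<lambda>a. {p \<in> points V \<sigma>. letter_at V \<sigma> p = a}) (\<lambda>K. {p \<in> points V \<sigma>. lquot (word_upto V \<sigma> p) L = K})"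
proof -
  let ?S = "points V \<sigma>"
  have fin: "finite ?S"
    using V \<sigma> by (rule finite_points)
  have init: "{bot} \<inter> {p \<in> ?S. letter_at V \<sigma> p = a} \<subseteq> {p \<in> ?S. lquot (word_upto V \<sigma> p) L = lquot [a] L}" for a
    by (auto simp: word_upto_bot)
  have step: "ips ?S {p \<in> ?S. letter_at V \<sigma> p = a} \<inter> {p \<in> ?S. lquot (word_upto V \<sigma> p) L = K} \<subseteq>
      ips ?S {p \<in> ?S. lquot (word_upto V \<sigma> p) L = lquot [a] K}" for a K
  proof
    fix q
    assume "q \<in> ips ?S {p \<in> ?S. letter_at V \<sigma> p = a} \<inter> {p \<in> ?S. lquot (word_upto V \<sigma> p) L = K}"
    then have q: "q \<in> ?S" "\<exists>j\<in>?S. q < j"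
      and "letter_at V \<sigma> (succ_in ?S q) = a" "lquot (word_upto V \<sigma> q) L = K"
      by (auto simp: ips_def)
    then have "lquot (word_upto V \<sigma> (succ_in ?S q)) L = lquot [a] K"
      by (simp add: word_upto_succ_in[OF V \<sigma> q] lquot_append)
    with q show "q \<in> ips ?S {p \<in> ?S. lquot (word_upto V \<sigma> p) L = lquot [a] K}"
      using succ_in_mem[OF fin q] by (simp add: ips_def)
  qed
  have final: "set_max ?S \<subseteq> {p \<in> ?S. lquot (word_upto V \<sigma> p) L = lquot (word V \<sigma>) L}"
  proof -
    have "?S \<noteq> {}"
      by (simp add: points_def)
    then have "set_max ?S = {Max ?S}" "Max ?S \<in> ?S"
      using Max_in[OF fin] by (simp_all add: set_max_def)
    then show ?thesis
      by (simp add: word_upto_Max[OF V \<sigma>])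
  qed
  have "[] \<in> lquot (word V \<sigma>) L"
    using w by (simp add: lquot_def)
  then have "set_max ?S \<subseteq> (\<Union>K\<in>{K \<in> range (\<lambda>u. lquot u L). [] \<in> K}. {p \<in> ?S. lquot (word_upto V \<sigma> p) L = K})"
    using final by blast
  with init step show ?thesis
    unfolding accepting_run_def by auto
qed

lemma letter_labelling_cong:
  assumes "\<And>y. y \<in> V \<Longrightarrow> \<sigma> y = \<sigma>' y" "\<And>a. a \<in> letters V \<Longrightarrow> X a = X' a"
  shows "letter_labelling V \<sigma> X \<longleftrightarrow> letter_labelling V \<sigma>' X'"
proof -
  have "points V \<sigma> = points V \<sigma>'"
    using assms(1) by (simp add: points_def)
  with assms show ?thesis
    by (simp add: letter_labelling_def)
qed

lemma accepting_run_cong: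
  assumes "\<And>a. a \<in> letters V \<Longrightarrow> X a = X' a" "\<And>K. K \<in> range (\<lambda>u. lquot u L) \<Longrightarrow> Q K = Q' K"
  shows "accepting_run V L S X Q \<longleftrightarrow> accepting_run V L S X' Q'"
proof -
  have "lquot [a] K \<in> range (\<lambda>u. lquot u L)" if "K \<in> range (\<lambda>u. lquot u L)" for a K
    using that by (rule lquot_in_range)
  moreover have "lquot [a] L \<in> range (\<lambda>u. lquot u L)" for a
    by blast
  ultimately show ?thesis
    using assms by (simp add: accepting_run_def)
qed

section \<open>Positive existential formulas\<close>

definition fm_true :: fm where
  "fm_true = FEq TBot TBot"

definition fm_Conj_list :: "fm list \<Rightarrow> fm" where
  "fm_Conj_list \<phi>s = foldr FConj \<phi>s fm_true"

definition fm_Ex_list :: "nat list \<Rightarrow> fm \<Rightarrow> fm" where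
  "fm_Ex_list ns \<phi> = foldr FEx ns \<phi>"

definition tm_Un_list :: "tm list \<Rightarrow> tm" where
  "tm_Un_list ts = foldr TUn ts TBot"

definition fm_subset :: "tm \<Rightarrow> tm \<Rightarrow> fm" where
  "fm_subset s t = FEq (TInt s t) s"

definition fm_disjoint :: "tm \<Rightarrow> tm \<Rightarrow> fm" where
  "fm_disjoint s t = FEq (TInt s t) TBot"

lemma holds_fm_Conj_list [simp]: "holds \<sigma> (fm_Conj_list \<phi>s) \<longleftrightarrow> (\<forall>\<phi>\<in>set \<phi>s. holds \<sigma> \<phi>)"
  by (induction \<phi>s) (simp_all add: fm_Conj_list_def fm_true_def)

lemma pos_ex_fm_Conj_list [simp]: "pos_ex (fm_Conj_list \<phi>s) \<longleftrightarrow> (\<forall>\<phi>\<in>set \<phi>s. pos_ex \<phi>)"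
  by (induction \<phi>s) (simp_all add: fm_Conj_list_def fm_true_def)

lemma free_vars_fm_Conj_list [simp]: "free_vars (fm_Conj_list \<phi>s) = (\<Union>\<phi>\<in>set \<phi>s. free_vars \<phi>)"
  by (induction \<phi>s) (simp_all add: fm_Conj_list_def fm_true_def)

lemma pos_ex_fm_Ex_list [simp]: "pos_ex (fm_Ex_list ns \<phi>) \<longleftrightarrow> pos_ex \<phi>"
  by (induction ns) (simp_all add: fm_Ex_list_def)

lemma free_vars_fm_Ex_list [simp]: "free_vars (fm_Ex_list ns \<phi>) = free_vars \<phi> - set ns"
  by (induction ns) (auto simp: fm_Ex_list_def)

lemma holds_fm_Ex_list:
  "holds \<sigma> (fm_Ex_list ns \<phi>) \<longleftrightarrow>
    (\<exists>\<tau>. (\<forall>n\<in>set ns. finite (\<tau> n)) \<and> (\<forall>n. n \<notin> set ns \<longrightarrow> \<tau> n = \<sigma> n) \<and> holds \<tau> \<phi>)"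
proof (induction ns arbitrary: \<sigma>)
  case Nil
  have "(\<forall>n. \<tau> n = \<sigma> n) \<longleftrightarrow> \<tau> = \<sigma>" for \<tau> :: "nat \<Rightarrow> 'a set"
    by auto
  then show ?case
    by (simp add: fm_Ex_list_def)
next
  case (Cons m ns)
  have "holds \<sigma> (fm_Ex_list (m # ns) \<phi>) \<longleftrightarrow> (\<exists>A. finite A \<and> holds (\<sigma>(m := A)) (fm_Ex_list ns \<phi>))"
    by (simp add: fm_Ex_list_def)
  also have "\<dots> \<longleftrightarrow> (\<exists>A. finite A \<and> (\<exists>\<tau>. (\<forall>n\<in>set ns. finite (\<tau> n)) \<and>
      (\<forall>n. n \<notin> set ns \<longrightarrow> \<tau> n = (\<sigma>(m := A)) n) \<and> holds \<tau> \<phi>))"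
    by (simp only: Cons.IH)
  also have "\<dots> \<longleftrightarrow> (\<exists>\<tau>. (\<forall>n\<in>set (m # ns). finite (\<tau> n)) \<and>
      (\<forall>n. n \<notin> set (m # ns) \<longrightarrow> \<tau> n = \<sigma> n) \<and> holds \<tau> \<phi>)"
  proof
    assume "\<exists>A. finite A \<and> (\<exists>\<tau>. (\<forall>n\<in>set ns. finite (\<tau> n)) \<and>
      (\<forall>n. n \<notin> set ns \<longrightarrow> \<tau> n = (\<sigma>(m := A)) n) \<and> holds \<tau> \<phi>)"
    then obtain A \<tau> where A: "finite A" and \<tau>: "\<forall>n\<in>set ns. finite (\<tau> n)"
      "\<forall>n. n \<notin> set ns \<longrightarrow> \<tau> n = (\<sigma>(m := A)) n" "holds \<tau> \<phi>"
      by blast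
    have "finite (\<tau> m)"
      using A \<tau> by (cases "m \<in> set ns") auto
    with \<tau> show "\<exists>\<tau>. (\<forall>n\<in>set (m # ns). finite (\<tau> n)) \<and>
        (\<forall>n. n \<notin> set (m # ns) \<longrightarrow> \<tau> n = \<sigma> n) \<and> holds \<tau> \<phi>"
      by (intro exI[of _ \<tau>]) auto
  next
    assume "\<exists>\<tau>. (\<forall>n\<in>set (m # ns). finite (\<tau> n)) \<and>
        (\<forall>n. n \<notin> set (m # ns) \<longrightarrow> \<tau> n = \<sigma> n) \<and> holds \<tau> \<phi>"
    then obtain \<tau> where "\<forall>n\<in>set (m # ns). finite (\<tau> n)"
      "\<forall>n. n \<notin> set (m # ns) \<longrightarrow> \<tau> n = \<sigma> n" "holds \<tau> \<phi>"
      by blast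
    then show "\<exists>A. finite A \<and> (\<exists>\<tau>. (\<forall>n\<in>set ns. finite (\<tau> n)) \<and>
        (\<forall>n. n \<notin> set ns \<longrightarrow> \<tau> n = (\<sigma>(m := A)) n) \<and> holds \<tau> \<phi>)"
      by (intro exI[of _ "\<tau> m"] exI[of _ \<tau>]) auto
  qed
  finally show ?case .
qed

lemma eval_tm_Un_list [simp]: "eval_tm \<sigma> (tm_Un_list ts) = (\<Union>t\<in>set ts. eval_tm \<sigma> t)"
  by (induction ts) (simp_all add: tm_Un_list_def)

lemma vars_tm_Un_list [simp]: "vars_tm (tm_Un_list ts) = (\<Union>t\<in>set ts. vars_tm t)"
  by (induction ts) (simp_all add: tm_Un_list_def)

lemma holds_fm_subset [simp]: "holds \<sigma> (fm_subset s t) \<longleftrightarrow> eval_tm \<sigma> s \<subseteq> eval_tm \<sigma> t"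
  by (auto simp: fm_subset_def)

lemma holds_fm_disjoint [simp]: "holds \<sigma> (fm_disjoint s t) \<longleftrightarrow> eval_tm \<sigma> s \<inter> eval_tm \<sigma> t = {}"
  by (simp add: fm_disjoint_def)

lemma pos_ex_fm_subset [simp]: "pos_ex (fm_subset s t)" "pos_ex (fm_disjoint s t)"
  by (simp_all add: fm_subset_def fm_disjoint_def)

lemma free_vars_fm_subset [simp]:
  "free_vars (fm_subset s t) = vars_tm s \<union> vars_tm t"
  "free_vars (fm_disjoint s t) = vars_tm s \<union> vars_tm t"
  by (auto simp: fm_subset_def fm_disjoint_def)

lemma ball_set_concat_map: "(\<forall>x\<in>set (concat (map f xs)). P x) \<longleftrightarrow> (\<forall>a\<in>set xs. \<forall>x\<in>set (f a). P x)"
  by auto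

lemma ball_set_map: "(\<forall>x\<in>set (map f xs). P x) \<longleftrightarrow> (\<forall>a\<in>set xs. P (f a))"
  by auto

locale run_encoding =
  fixes V :: "nat set" and L :: "letter list set"
    and vs :: "nat list" and ls :: "letter list" and qs :: "letter list set list"
    and var :: "letter + letter list set \<Rightarrow> nat"
  assumes set_vs: "set vs = V"
    and set_ls: "set ls = letters V"
    and set_qs: "set qs = range (\<lambda>u. lquot u L)"
    and inj_var: "inj_on var (Inl ` set ls \<union> Inr ` set qs)"
    and var_notin: "var k \<notin> V"
begin

abbreviation X_tm :: "letter \<Rightarrow> tm" where
  "X_tm a \<equiv> TVar (var (Inl a))"

abbreviation Q_tm :: "letter list set \<Rightarrow> tm" where
  "Q_tm K \<equiv> TVar (var (Inr K))"

definition points_tm :: tm where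
  "points_tm = TUn TC0 (tm_Un_list (map TVar vs))"

definition run_conditions :: "fm list" where
  "run_conditions =
     fm_subset points_tm (tm_Un_list (map X_tm ls)) #
     [if y \<in> snd a then fm_subset (X_tm a) (TVar y) else fm_disjoint (X_tm a) (TVar y). a \<leftarrow> ls, y \<leftarrow> vs] @
     [if fst a then fm_subset (X_tm a) TC0 else fm_disjoint (X_tm a) TC0. a \<leftarrow> ls] @
     [fm_disjoint (Q_tm K) (Q_tm K'). K \<leftarrow> qs, K' \<leftarrow> qs, K \<noteq> K'] @
     [fm_subset (TInt TC0 (X_tm a)) (Q_tm (lquot [a] L)). a \<leftarrow> ls] @
     [fm_subset (TInt (TIps points_tm (X_tm a)) (Q_tm K)) (TIps points_tm (Q_tm (lquot [a] K))). K \<leftarrow> qs, a \<leftarrow> ls] @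
     [fm_subset (TMax points_tm) (tm_Un_list [Q_tm K. K \<leftarrow> qs, [] \<in> K])]"

definition bound_vars :: "nat list" where
  "bound_vars = map (var \<circ> Inl) ls @ map (var \<circ> Inr) qs"

definition run_formula :: fm where
  "run_formula = fm_Ex_list bound_vars (fm_Conj_list run_conditions)"

lemma eval_points_tm [simp]: "eval_tm \<tau> points_tm = points V \<tau>"
  by (auto simp: points_tm_def points_def set_vs)

lemma holds_run_conditions:
  "holds \<tau> (fm_Conj_list run_conditions) \<longleftrightarrow>
    letter_labelling V \<tau> (\<lambda>a. \<tau> (var (Inl a))) \<and>
    accepting_run V L (points V \<tau>) (\<lambda>a. \<tau> (var (Inl a))) (\<lambda>K. \<tau> (var (Inr K)))"
proof -
  let ?X = "\<lambda>a. \<tau> (var (Inl a))" and ?Q = "\<lambda>K. \<tau> (var (Inr K))" and ?S = "points V \<tau>"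
  have 1: "holds \<tau> (fm_subset points_tm (tm_Un_list (map X_tm ls))) \<longleftrightarrow> ?S \<subseteq> (\<Union>a\<in>letters V. ?X a)"
    by (simp add: set_ls)
  have 2: "(\<forall>\<phi>\<in>set [if y \<in> snd a then fm_subset (X_tm a) (TVar y) else fm_disjoint (X_tm a) (TVar y).
        a \<leftarrow> ls, y \<leftarrow> vs]. holds \<tau> \<phi>) \<longleftrightarrow>
      (\<forall>a\<in>letters V. \<forall>y\<in>V. if y \<in> snd a then ?X a \<subseteq> \<tau> y else ?X a \<inter> \<tau> y = {})"
    unfolding ball_set_concat_map ball_set_map set_ls set_vs by simp
  have 3: "(\<forall>\<phi>\<in>set [if fst a then fm_subset (X_tm a) TC0 else fm_disjoint (X_tm a) TC0. a \<leftarrow> ls].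
        holds \<tau> \<phi>) \<longleftrightarrow> (\<forall>a\<in>letters V. if fst a then ?X a \<subseteq> {bot} else bot \<notin> ?X a)"
    unfolding ball_set_concat_map ball_set_map set_ls by simp
  have 4: "(\<forall>\<phi>\<in>set [fm_disjoint (Q_tm K) (Q_tm K'). K \<leftarrow> qs, K' \<leftarrow> qs, K \<noteq> K']. holds \<tau> \<phi>) \<longleftrightarrow>
      (\<forall>K\<in>range (\<lambda>u. lquot u L). \<forall>K'\<in>range (\<lambda>u. lquot u L). K \<noteq> K' \<longrightarrow> ?Q K \<inter> ?Q K' = {})"
    unfolding ball_set_concat_map ball_set_map set_qs by simp
  have 5: "(\<forall>\<phi>\<in>set [fm_subset (TInt TC0 (X_tm a)) (Q_tm (lquot [a] L)). a \<leftarrow> ls]. holds \<tau> \<phi>) \<longleftrightarrow>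
      (\<forall>a\<in>letters V. {bot} \<inter> ?X a \<subseteq> ?Q (lquot [a] L))"
    unfolding ball_set_concat_map ball_set_map set_ls by simp
  have 6: "(\<forall>\<phi>\<in>set [fm_subset (TInt (TIps points_tm (X_tm a)) (Q_tm K)) (TIps points_tm (Q_tm (lquot [a] K))).
        K \<leftarrow> qs, a \<leftarrow> ls]. holds \<tau> \<phi>) \<longleftrightarrow>
      (\<forall>K\<in>range (\<lambda>u. lquot u L). \<forall>a\<in>letters V. ips ?S (?X a) \<inter> ?Q K \<subseteq> ips ?S (?Q (lquot [a] K)))"
    unfolding ball_set_concat_map ball_set_map set_ls set_qs by simp
  have 7: "holds \<tau> (fm_subset (TMax points_tm) (tm_Un_list [Q_tm K. K \<leftarrow> qs, [] \<in> K])) \<longleftrightarrow>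
      set_max ?S \<subseteq> (\<Union>K\<in>{K \<in> range (\<lambda>u. lquot u L). [] \<in> K}. ?Q K)"
    by (simp add: set_qs Int_def)
  show ?thesis
    unfolding holds_fm_Conj_list run_conditions_def set_append ball_Un list.set ball_simps
      letter_labelling_def accepting_run_def 1 2 3 4 5 6 7
    by simp
qed

lemma pos_ex_run_formula: "pos_ex run_formula"
  by (simp add: run_formula_def run_conditions_def ball_set_concat_map ball_set_map ball_Un del: set_concat set_map)

lemma free_vars_run_formula: "free_vars run_formula \<subseteq> V"
proof -
  have "lquot [a] L \<in> set qs" "K \<in> set qs \<Longrightarrow> lquot [a] K \<in> set qs" for a K
    using lquot_in_range[of _ L] by (auto simp: set_qs)
  then have "\<forall>\<phi>\<in>set run_conditions. free_vars \<phi> \<subseteq> V \<union> set bound_vars"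
    by (simp add: run_conditions_def bound_vars_def points_tm_def set_vs ball_set_concat_map ball_set_map ball_Un
        del: set_concat set_map) (auto simp: set_vs)
  then show ?thesis
    by (auto simp: run_formula_def)
qed

lemma holds_run_formula_imp_word_in:
  assumes V: "finite V" and \<sigma>: "finite_assignment \<sigma>" and "holds \<sigma> run_formula"
  shows "word V \<sigma> \<in> L"
proof -
  obtain \<tau> where \<tau>: "\<forall>n\<in>set bound_vars. finite (\<tau> n)" "\<forall>n. n \<notin> set bound_vars \<longrightarrow> \<tau> n = \<sigma> n"
    and run: "holds \<tau> (fm_Conj_list run_conditions)"
    using \<open>holds \<sigma> run_formula\<close> unfolding run_formula_def holds_fm_Ex_list by blast
  have agree: "\<tau> y = \<sigma> y" if "y \<in> V" for y
  proof -
    have "y \<notin> set bound_vars"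
      using var_notin that by (auto simp: bound_vars_def)
    with \<tau>(2) show ?thesis
      by blast
  qed
  have "finite_assignment \<tau>"
    using \<tau> \<sigma> by metis
  moreover from run have "letter_labelling V \<tau> (\<lambda>a. \<tau> (var (Inl a)))"
    and "accepting_run V L (points V \<tau>) (\<lambda>a. \<tau> (var (Inl a))) (\<lambda>K. \<tau> (var (Inr K)))"
    by (simp_all only: holds_run_conditions)
  ultimately have "word V \<tau> \<in> L"
    by (rule accepting_run_imp_word_in[OF V])
  then show ?thesis
    using word_cong[of V \<tau> \<sigma>] agree by simp
qed

lemma word_in_imp_holds_run_formula:
  assumes V: "finite V" and \<sigma>: "finite_assignment \<sigma>" and "word V \<sigma> \<in> L"
  shows "holds \<sigma> run_formula"
proof -
  let ?keys = "Inl ` set ls \<union> Inr ` set qs"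
  let ?X = "\<lambda>a. {p \<in> points V \<sigma>. letter_at V \<sigma> p = a}"
    and ?Q = "\<lambda>K. {p \<in> points V \<sigma>. lquot (word_upto V \<sigma> p) L = K}"
  have X: "letter_labelling V \<sigma> ?X" and Q: "accepting_run V L (points V \<sigma>) ?X ?Q"
    using letter_labelling_letter_at word_in_imp_accepting_run[OF V \<sigma> \<open>word V \<sigma> \<in> L\<close>] by blast+
  define \<tau> where "\<tau> n = (if n \<in> var ` ?keys then case_sum ?X ?Q (inv_into ?keys var n) else \<sigma> n)" for n
  have \<tau>_X: "\<tau> (var (Inl a)) = ?X a" if "a \<in> letters V" for a
    using that inj_var by (simp add: \<tau>_def set_ls)
  have \<tau>_Q: "\<tau> (var (Inr K)) = ?Q K" if "K \<in> range (\<lambda>u. lquot u L)" for K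
    using that inj_var by (simp add: \<tau>_def set_qs)
  have \<tau>_V: "\<tau> y = \<sigma> y" if "y \<in> V" for y
    using that var_notin by (auto simp: \<tau>_def)
  have "letter_labelling V \<tau> (\<lambda>a. \<tau> (var (Inl a)))"
    by (rule letter_labelling_cong[of V \<tau> \<sigma> _ ?X, THEN iffD2]) (simp_all add: \<tau>_V \<tau>_X X)
  moreover have "points V \<tau> = points V \<sigma>"
    using \<tau>_V by (simp add: points_def)
  then have "accepting_run V L (points V \<tau>) (\<lambda>a. \<tau> (var (Inl a))) (\<lambda>K. \<tau> (var (Inr K)))"
    by (simp only:) (rule accepting_run_cong[of V _ ?X L _ ?Q, THEN iffD2]; simp add: \<tau>_X \<tau>_Q Q)
  ultimately have "holds \<tau> (fm_Conj_list run_conditions)"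
    by (simp only: holds_run_conditions)
  moreover have "\<forall>n\<in>set bound_vars. finite (\<tau> n)"
    using finite_points[OF V \<sigma>] by (auto simp: bound_vars_def set_ls set_qs \<tau>_X \<tau>_Q)
  moreover have "\<forall>n. n \<notin> set bound_vars \<longrightarrow> \<tau> n = \<sigma> n"
    by (auto simp: bound_vars_def \<tau>_def)
  ultimately show ?thesis
    unfolding run_formula_def holds_fm_Ex_list by blast
qed

lemma holds_run_formula:
  "finite V \<Longrightarrow> finite_assignment \<sigma> \<Longrightarrow> holds \<sigma> run_formula \<longleftrightarrow> word V \<sigma> \<in> L"
  using holds_run_formula_imp_word_in word_in_imp_holds_run_formula by blast

end

lemma run_encoding_exists:
  assumes V: "finite V" and L: "regular L"
  shows "\<exists>vs ls qs var. run_encoding V L vs ls qs var"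
proof -
  obtain vs where vs: "set vs = V"
    using finite_list[OF V] by blast
  obtain ls where ls: "set ls = letters V"
    using finite_list[OF finite_letters[OF V]] by blast
  have "finite (range (\<lambda>u. lquot u L))"
    using L by (simp add: regular_def)
  from finite_list[OF this] obtain qs where qs: "set qs = range (\<lambda>u. lquot u L)"
    by blast
  have "finite (Inl ` set ls \<union> Inr ` set qs)"
    by simp
  from finite_imp_inj_to_nat_seg[OF this]
  obtain e :: "letter + letter list set \<Rightarrow> nat" where e: "inj_on e (Inl ` set ls \<union> Inr ` set qs)"
    by meson
  from finite_nat_set_iff_bounded[THEN iffD1, OF V] obtain N where N: "\<forall>v\<in>V. v < N"
    by blast
  have "inj_on ((+) N \<circ> e) (Inl ` set ls \<union> Inr ` set qs)"
    by (rule comp_inj_on[OF e]) (simp add: inj_on_def)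
  then have "inj_on (\<lambda>k. N + e k) (Inl ` set ls \<union> Inr ` set qs)"
    by (simp add: comp_def)
  moreover have "N + e k \<notin> V" for k
    using N by auto
  ultimately have "run_encoding V L vs ls qs (\<lambda>k. N + e k)"
    using vs ls qs by unfold_locales
  then show ?thesis
    by blast
qed

lemma recognizable_imp_pos_ex:
  assumes "recognizable V P"
  shows "\<exists>\<psi>. pos_ex \<psi> \<and> free_vars \<psi> \<subseteq> V \<and> (\<forall>\<sigma>. finite_assignment \<sigma> \<longrightarrow> (P \<sigma> \<longleftrightarrow> holds \<sigma> \<psi>))"
proof -
  have V: "finite V"
    using assms by (rule recognizable_finite)
  obtain L where L: "regular L" "\<And>\<sigma>. finite_assignment \<sigma> \<Longrightarrow> P \<sigma> \<longleftrightarrow> word V \<sigma> \<in> L"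
    using assms unfolding recognizable_def by meson
  then obtain vs ls qs var where "run_encoding V L vs ls qs var"
    using run_encoding_exists[OF V] by blast
  then interpret run_encoding V L vs ls qs var .
  show ?thesis
    using pos_ex_run_formula free_vars_run_formula holds_run_formula[OF V] L(2) by blast
qed

theorem theorem3p6:
  fixes I_type :: "'a::{dense_linorder, no_top, order_bot} itself"
  shows "\<forall>\<phi>. \<exists>\<psi>. pos_ex \<psi> \<and> free_vars \<psi> \<subseteq> free_vars \<phi> \<and>
           (\<forall>\<sigma> :: nat \<Rightarrow> 'a set. (\<forall>n. finite (\<sigma> n)) \<longrightarrow> (holds \<sigma> \<phi> \<longleftrightarrow> holds \<sigma> \<psi>))"
  using recognizable_imp_pos_ex[OF recognizable_holds] by blast

end
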